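(* For every problem $f$ we have $\overline{f'}\le_{sW}(\overline f)'\equiv_{sW}\overline{(\overline f)'}$. In particular, if $f$ is strongly complete (i.e. $f\equiv_{sW}\overline f$), then its jump $f'$ is strongly complete.
   Context: Represented space $(X,\delta_X)$: set with surjective partial $\delta_X:\subseteq\mathbb{N}^\mathbb{N}\to X$. A problem $f:\subseteq X\rightrightarrows Y$ is a partial multi-valued map with nonempty values on its domain; $F\vdash f$ means $\delta_YF(p)\in f(\delta_X(p))$ whenever $\delta_X(p)\in\mathrm{dom}(f)$. $f\le_{sW}g$ iff there are computable partial $H,K:\subseteq\mathbb{N}^\mathbb{N}\to\mathbb{N}^\mathbb{N}$ with $HGK\vdash f$ for all $G\vdash g$; $\equiv_{sW}$ is the induced equivalence. $\lim:\subseteq\mathbb{N}^\mathbb{N}\to\mathbb{N}^\mathbb{N}$ maps $\langle p_0,p_1,\dots\rangle$ (standard infinite tupling) to $\lim_n p_n$ when it exists. The jump of $f:\subseteq X\rightrightarrows Y$ is $f':\subseteq X'\rightrightarrows Y$, the same multi-valued map with input space $X'=(X,\delta_X\circ\lim)$. For $p\in\mathbb{N}^\mathbb{N}$, $p-1$ is the concatenation of $p(0)-1,p(1)-1,\dots$ with $0-1$ the empty word. The completion of $(X,\delta_X)$ is $\overline X=X\cup\{\bot\}$ with $\delta_{\overline X}(p)=\delta_X(p-1)$ if $p-1$ is an infinite sequence in $\mathrm{dom}(\delta_X)$, $\delta_{\overline X}(p)=\bot$ otherwise; the completion of $f$ is $\overline f:\overline X\rightrightarrows\overline Y$, $\overline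 f(x)=f(x)$ on $\mathrm{dom}(f)$ and $\overline Y$ otherwise. *)

theory Defs
  imports Main "HOL-Library.Infinite_Set" "HOL-Library.Nat_Bijection"
begin

type_synonym baire = "nat \<Rightarrow> nat"

datatype recf = Zero | Succ | Proj nat | Orac | Comp recf "recf list"
  | Prec recf recf | Mu recf

inductive ev :: "baire \<Rightarrow> recf \<Rightarrow> nat list \<Rightarrow> nat \<Rightarrow> bool" for p :: baire where
  ev_zero: "ev p Zero xs 0"
| ev_succ: "ev p Succ (x # xs) (Suc x)"
| ev_proj: "i < length xs \<Longrightarrow> ev p (Proj i) xs (xs ! i)"
| ev_orac: "ev p Orac (x # xs) (p x)"
| ev_comp: "length ys = length gs \<Longrightarrow> (\<forall>i<length gs. ev p (gs ! i) xs (ys ! i))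
             \<Longrightarrow> ev p f ys z \<Longrightarrow> ev p (Comp f gs) xs z"
| ev_prec0: "ev p f xs y \<Longrightarrow> ev p (Prec f g) (0 # xs) y"
| ev_precS: "ev p (Prec f g) (n # xs) y \<Longrightarrow> ev p g (n # y # xs) z
             \<Longrightarrow> ev p (Prec f g) (Suc n # xs) z"
| ev_mu: "ev p f (n # xs) 0 \<Longrightarrow> (\<forall>m<n. \<exists>y. ev p f (m # xs) (Suc y))
             \<Longrightarrow> ev p (Mu f) xs n"

definition computable :: "(baire \<Rightarrow> baire option) \<Rightarrow> bool" where
  "computable F \<longleftrightarrow> (\<exists>e. \<forall>p q. F p = Some q \<longrightarrow> (\<forall>n. ev p e [n] (q n)))"

type_synonym 'a rep = "baire \<Rightarrow> 'a option"

definition represented :: "'a rep \<Rightarrow> bool" where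
  "represented \<delta> \<longleftrightarrow> (\<forall>x. \<exists>p. \<delta> p = Some x)"

text \<open>A problem f :\<subseteq> X \<rightrightarrows> Y is a map to sets of values; its domain
  is the set of points with nonempty value set.\<close>
type_synonym ('a, 'b) problem = "'a \<Rightarrow> 'b set"

definition realizes :: "'a rep \<Rightarrow> 'b rep \<Rightarrow> ('a, 'b) problem \<Rightarrow> (baire \<Rightarrow> baire option) \<Rightarrow> bool" where
  "realizes \<delta>X \<delta>Y f F \<longleftrightarrow>
     (\<forall>p x. \<delta>X p = Some x \<and> f x \<noteq> {} \<longrightarrow>
        (\<exists>q y. F p = Some q \<and> \<delta>Y q = Some y \<and> y \<in> f x))"

definition sW_le :: "'a rep \<Rightarrow> 'b rep \<Rightarrow> ('a, 'b) problem \<Rightarrow>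
                     'c rep \<Rightarrow> 'd rep \<Rightarrow> ('c, 'd) problem \<Rightarrow> bool" where
  "sW_le \<delta>X \<delta>Y f \<delta>Z \<delta>W g \<longleftrightarrow>
     (\<exists>H K. computable H \<and> computable K \<and>
        (\<forall>G. realizes \<delta>Z \<delta>W g G \<longrightarrow>
              realizes \<delta>X \<delta>Y f (\<lambda>p. Option.bind (Option.bind (K p) G) H)))"

definition sW_equiv :: "'a rep \<Rightarrow> 'b rep \<Rightarrow> ('a, 'b) problem \<Rightarrow>
                        'c rep \<Rightarrow> 'd rep \<Rightarrow> ('c, 'd) problem \<Rightarrow> bool" where
  "sW_equiv \<delta>X \<delta>Y f \<delta>Z \<delta>W g \<longleftrightarrow> sW_le \<delta>X \<delta>Y f \<delta>Z \<delta>W g \<and> sW_le \<delta>Z \<delta>W g \<delta>X \<delta>Y f"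

text \<open>Standard infinite tupling: the i-th component of p is (\<lambda>j. p (prod_encode (i,j))).
  lim maps p to the pointwise limit of its components, if it exists.\<close>

definition lim_conv :: "baire \<Rightarrow> baire \<Rightarrow> bool" where
  "lim_conv p q \<longleftrightarrow> (\<forall>j. \<exists>N. \<forall>i\<ge>N. p (prod_encode (i, j)) = q j)"

definition baire_lim :: "baire \<Rightarrow> baire option" where
  "baire_lim p = (if \<exists>q. lim_conv p q then Some (THE q. lim_conv p q) else None)"

definition jump_rep :: "'a rep \<Rightarrow> 'a rep" where
  "jump_rep \<delta> = (\<lambda>p. Option.bind (baire_lim p) \<delta>)"

text \<open>p - 1: concatenation of the words p(0)-1, p(1)-1, ... where 0-1 is the empty
  word and n+1-1 is the one-letter word n.  It is an infinite sequence iff p has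
  infinitely many nonzero entries; then its k-th letter is p(n_k)-1 for the k-th
  index n_k with p(n_k) > 0.\<close>

definition minus_one :: "baire \<Rightarrow> baire option" where
  "minus_one p = (if infinite {n. 0 < p n}
                  then Some (\<lambda>k. p (enumerate {n. 0 < p n} k) - 1) else None)"

text \<open>Completion of a represented space: \<bottom> is None.\<close>
definition compl_rep :: "'a rep \<Rightarrow> 'a option rep" where
  "compl_rep \<delta> = (\<lambda>p. case minus_one p of
                        Some q \<Rightarrow> (case \<delta> q of Some x \<Rightarrow> Some (Some x) | None \<Rightarrow> Some None)
                      | None \<Rightarrow> Some None)"

definition compl_prob :: "('a, 'b) problem \<Rightarrow> ('a option, 'b option) problem" where
  "compl_prob f = (\<lambda>x. case x of Some a \<Rightarrow> (if f a \<noteq> {} then Some ` f a else UNIV)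
                                | None \<Rightarrow> UNIV)"

end

theory Submission
  imports Defs "HOL-Library.More_List"
begin

text \<open>
  Every sequence names a point of the completion: its positive entries, decreased by one, spell a
  name of the original point, zeros are padding, and a sequence that spells no name names
  \<open>\<bottom>\<close>.  Hence every problem reduces to its completion (shift a name by one, strip the
  answer by \<open>p - 1\<close>), and jumps preserve strong reductions, since a computable map applied to
  the limit of a sequence can be run stagewise with the \<open>n\<close>-th row as oracle.

  The core is the reduction of the completion of the jump to the jump of the completion.  Given a
  completion name of a limit name, stage \<open>n\<close> reads the first \<open>n\<close> entries, guesses every
  entry of the limit, and writes the \<open>j\<close>-th guess at the end of a block whose length is the
  number of times this guess has changed so far.  Every cell converges: if all guesses converge,
  the blocks settle and the limit, stripped of its padding, is the limit name; a guess that
  changes infinitely often pushes all later blocks to infinity.  Strong completeness of the jump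
  then follows by transitivity through the jump of the completion.
\<close>

section \<open>Functionals computed by oracle terms\<close>

definition recfun :: "nat \<Rightarrow> (baire \<Rightarrow> nat list \<Rightarrow> nat) \<Rightarrow> bool" where
  "recfun k F \<longleftrightarrow> (\<exists>e. \<forall>p xs. length xs = k \<longrightarrow> ev p e xs (F p xs))"

lemma recfun_cong: "recfun k F \<Longrightarrow> (\<And>p xs. length xs = k \<Longrightarrow> F p xs = G p xs) \<Longrightarrow> recfun k G"
  unfolding recfun_def by metis

lemma recfun_zero: "recfun k (\<lambda>p xs. 0)"
  unfolding recfun_def by (auto intro: ev_zero)

lemma recfun_proj: "i < k \<Longrightarrow> recfun k (\<lambda>p xs. xs ! i)"
  unfolding recfun_def by (auto intro: ev_proj)

lemma recfun_succ: "recfun k F \<Longrightarrow> recfun k (\<lambda>p xs. Suc (F p xs))"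
  unfolding recfun_def
proof (elim exE)
  fix e assume e: "\<forall>p xs. length xs = k \<longrightarrow> ev p e xs (F p xs)"
  show "\<exists>e. \<forall>p xs. length xs = k \<longrightarrow> ev p e xs (Suc (F p xs))"
    using e by (intro exI[of _ "Comp Succ [e]"])
      (auto intro!: ev_comp[where ys="[F _ _]"] ev_succ[where xs="[]", simplified])
qed

lemma recfun_orac: "recfun k F \<Longrightarrow> recfun k (\<lambda>p xs. p (F p xs))"
  unfolding recfun_def
proof (elim exE)
  fix e assume e: "\<forall>p xs. length xs = k \<longrightarrow> ev p e xs (F p xs)"
  show "\<exists>e. \<forall>p xs. length xs = k \<longrightarrow> ev p e xs (p (F p xs))"
    using e by (intro exI[of _ "Comp Orac [e]"])
      (auto intro!: ev_comp[where ys="[F _ _]"] ev_orac[where xs="[]", simplified])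
qed

lemma recfun_list_terms: "\<forall>G\<in>set Gs. recfun k G \<Longrightarrow>
  \<exists>es. length es = length Gs \<and> (\<forall>i<length Gs. \<forall>p xs. length xs = k \<longrightarrow> ev p (es!i) xs ((Gs!i) p xs))"
proof (induction Gs)
  case Nil then show ?case by auto
next
  case (Cons G Gs)
  then obtain es where es: "length es = length Gs"
    "\<forall>i<length Gs. \<forall>p xs. length xs = k \<longrightarrow> ev p (es!i) xs ((Gs!i) p xs)" by auto
  from Cons.prems obtain e where e: "\<forall>p xs. length xs = k \<longrightarrow> ev p e xs (G p xs)"
    unfolding recfun_def by auto
  show ?case
    using es e by (intro exI[of _ "e # es"]) (auto simp: nth_Cons split: nat.split)
qed

lemma recfun_comp: "recfun m F \<Longrightarrow> length Gs = m \<Longrightarrow> \<forall>G\<in>set Gs. recfun k G \<Longrightarrow>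
   recfun k (\<lambda>p xs. F p (map (\<lambda>G. G p xs) Gs))"
proof -
  assume F: "recfun m F" and l: "length Gs = m" and G: "\<forall>G\<in>set Gs. recfun k G"
  obtain es where es: "length es = length Gs"
    "\<forall>i<length Gs. \<forall>p xs. length xs = k \<longrightarrow> ev p (es!i) xs ((Gs!i) p xs)"
    using recfun_list_terms[OF G] by auto
  obtain f where f: "\<forall>p xs. length xs = m \<longrightarrow> ev p f xs (F p xs)" using F unfolding recfun_def by auto
  show ?thesis unfolding recfun_def
  proof (rule exI[of _ "Comp f es"], intro allI impI)
    fix p xs assume lx: "length (xs::nat list) = k"
    show "ev p (Comp f es) xs (F p (map (\<lambda>G. G p xs) Gs))"
      by (rule ev_comp[where ys="map (\<lambda>G. G p xs) Gs"]) (use es f l lx in auto)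
  qed
qed

primrec prim_rec :: "(nat list \<Rightarrow> nat) \<Rightarrow> (nat list \<Rightarrow> nat) \<Rightarrow> nat \<Rightarrow> nat list \<Rightarrow> nat" where
  "prim_rec f g 0 ys = f ys"
| "prim_rec f g (Suc n) ys = g (n # prim_rec f g n ys # ys)"

lemma recfun_prim_rec: "recfun k F \<Longrightarrow> recfun (Suc (Suc k)) G \<Longrightarrow>
   recfun (Suc k) (\<lambda>p xs. prim_rec (F p) (G p) (hd xs) (tl xs))"
proof -
  assume F: "recfun k F" and G: "recfun (Suc (Suc k)) G"
  obtain f where f: "\<forall>p xs. length xs = k \<longrightarrow> ev p f xs (F p xs)" using F unfolding recfun_def by auto
  obtain g where g: "\<forall>p xs. length xs = Suc (Suc k) \<longrightarrow> ev p g xs (G p xs)"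
    using G unfolding recfun_def
    by auto
  have "length ys = k \<Longrightarrow> ev p (Prec f g) (n # ys) (prim_rec (F p) (G p) n ys)" for p n ys
  proof (induction n)
    case 0 then show ?case using f by (auto intro: ev_prec0)
  next
    case (Suc n) then show ?case using g by (auto intro: ev_precS)
  qed
  then show ?thesis unfolding recfun_def
    by (intro exI[of _ "Prec f g"]) (auto simp: length_Suc_conv)
qed

lemma recfun_comp1: "recfun 1 F \<Longrightarrow> recfun k G \<Longrightarrow> recfun k (\<lambda>p xs. F p [G p xs])"
  using recfun_comp[of 1 F "[G]" k] by auto
lemma recfun_comp2: "recfun 2 F \<Longrightarrow> recfun k G \<Longrightarrow> recfun k H \<Longrightarrow> recfun k (\<lambda>p xs. F p [G p xs, H p xs])"
  using recfun_comp[of 2 F "[G,H]" k] by auto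
lemma recfun_comp3:
  "recfun 3 F \<Longrightarrow> recfun k G \<Longrightarrow> recfun k H \<Longrightarrow> recfun k I \<Longrightarrow>
   recfun k (\<lambda>p xs. F p [G p xs, H p xs, I p xs])"
  using recfun_comp[of 3 F "[G,H,I]" k] by auto

lemma recfun_const: "recfun k (\<lambda>p xs. c)"
  by (induction c) (auto intro: recfun_zero dest: recfun_succ)

lemma recfun_permute: "recfun m F \<Longrightarrow> length is = m \<Longrightarrow> \<forall>i\<in>set is. i < k \<Longrightarrow>
   recfun k (\<lambda>p xs. F p (map (\<lambda>i. xs!i) is))"
proof -
  assume a: "recfun m F" "length is = m" "\<forall>i\<in>set is. i < k"
  have "recfun k (\<lambda>p xs. F p (map (\<lambda>G. G p xs) (map (\<lambda>i p xs. xs!i) is)))"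
    using a by (intro recfun_comp) (auto intro: recfun_proj)
  then show ?thesis by (simp add: comp_def)
qed

lemma prim_rec_add: "prim_rec (\<lambda>ys. ys!0) (\<lambda>zs. Suc (zs!Suc 0)) a ys = a + ys!0"
  by (induction a) auto
lemma recfun_add2: "recfun 2 (\<lambda>p xs. xs!0 + xs!1)"
proof -
  have "recfun 2 (\<lambda>p xs. prim_rec (\<lambda>ys. ys!0) (\<lambda>zs. Suc (zs!1)) (hd xs) (tl xs))"
    using recfun_prim_rec[of 1 "\<lambda>p ys. ys!0" "\<lambda>p zs. Suc (zs!1)"]
      by (simp add: numeral_2_eq_2 recfun_proj recfun_succ)
  then show ?thesis by (rule recfun_cong) (auto simp: prim_rec_add length_Suc_conv numeral_2_eq_2)
qed
lemma recfun_add: assumes "recfun k F" "recfun k G" shows "recfun k (\<lambda>p xs. F p xs + G p xs)"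
  by (rule recfun_cong[OF recfun_comp2[OF recfun_add2 assms]]) simp_all

lemma prim_rec_pred: "prim_rec (\<lambda>ys. 0) (\<lambda>zs. zs!0) a ys = a - 1"
  by (induction a) auto
lemma recfun_pred1: "recfun 1 (\<lambda>p xs. xs!0 - 1)"
proof -
  have "recfun 1 (\<lambda>p xs. prim_rec (\<lambda>ys. 0) (\<lambda>zs. zs!0) (hd xs) (tl xs))"
    using recfun_prim_rec[of 0 "\<lambda>p ys. 0" "\<lambda>p zs. zs!0"] by (auto intro: recfun_proj recfun_zero)
  then show ?thesis by (rule recfun_cong) (auto simp: prim_rec_pred length_Suc_conv)
qed
lemma recfun_pred: "recfun k F \<Longrightarrow> recfun k (\<lambda>p xs. F p xs - 1)"
  by (rule recfun_cong[OF recfun_comp1[OF recfun_pred1]]) simp_all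

lemma prim_rec_sub: "prim_rec (\<lambda>ys. ys!0) (\<lambda>zs. zs!Suc 0 - Suc 0) b ys = ys!0 - b"
  by (induction b) auto
lemma recfun_sub2: "recfun 2 (\<lambda>p xs. xs!1 - xs!0)"
proof -
  have "recfun 2 (\<lambda>p xs. prim_rec (\<lambda>ys. ys!0) (\<lambda>zs. zs!1 - 1) (hd xs) (tl xs))"
  proof -
    have "recfun 3 (\<lambda>p zs. zs!1 - 1)" by (rule recfun_pred[OF recfun_proj]) simp
    then show ?thesis using recfun_prim_rec[of 1 "\<lambda>p ys. ys!0" "\<lambda>p zs. zs!1 - 1"]
      by (simp add: numeral_2_eq_2 numeral_3_eq_3 recfun_proj)
  qed
  then show ?thesis by (rule recfun_cong) (auto simp: prim_rec_sub length_Suc_conv numeral_2_eq_2)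
qed
lemma recfun_sub: assumes "recfun k F" "recfun k G" shows "recfun k (\<lambda>p xs. F p xs - G p xs)"
  by (rule recfun_cong[OF recfun_comp2[OF recfun_sub2 assms(2,1)]]) simp_all

lemma prim_rec_mult: "prim_rec (\<lambda>ys. 0) (\<lambda>zs. zs!Suc 0 + zs!Suc (Suc 0)) a ys = a * ys!0"
  by (induction a) auto
lemma recfun_mult2: "recfun 2 (\<lambda>p xs. xs!0 * xs!1)"
proof -
  have "recfun 2 (\<lambda>p xs. prim_rec (\<lambda>ys. 0) (\<lambda>zs. zs!1 + zs!2) (hd xs) (tl xs))"
    using recfun_prim_rec[of 1 "\<lambda>p ys. 0" "\<lambda>p zs. zs!1 + zs!2"]
      by (simp add: numeral_2_eq_2 recfun_proj recfun_zero recfun_add[OF recfun_proj recfun_proj])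
  then show ?thesis by (rule recfun_cong) (auto simp: prim_rec_mult length_Suc_conv numeral_2_eq_2)
qed
lemma recfun_mult: assumes "recfun k F" "recfun k G" shows "recfun k (\<lambda>p xs. F p xs * G p xs)"
  by (rule recfun_cong[OF recfun_comp2[OF recfun_mult2 assms]]) simp_all

lemma prim_rec_ifz:
  "prim_rec (\<lambda>ys. ys!0) (\<lambda>zs. zs!Suc (Suc (Suc 0))) c ys = (if c = 0 then ys!0 else ys!Suc 0)"
  by (cases c) auto
lemma recfun_ifz3: "recfun 3 (\<lambda>p xs. if xs!0 = 0 then xs!1 else xs!2)"
proof -
  have "recfun 3 (\<lambda>p xs. prim_rec (\<lambda>ys. ys!0) (\<lambda>zs. zs!3) (hd xs) (tl xs))"
    using recfun_prim_rec[of 2 "\<lambda>p ys. ys!0" "\<lambda>p zs. zs!3"]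
      by (simp add: numeral_2_eq_2 numeral_3_eq_3 recfun_proj)
  then show ?thesis by (rule recfun_cong) (auto simp: prim_rec_ifz length_Suc_conv numeral_3_eq_3)
qed
lemma recfun_ifz:
  assumes "recfun k C" "recfun k A" "recfun k B"
  shows "recfun k (\<lambda>p xs. if C p xs = 0 then A p xs else B p xs)"
  by (rule recfun_cong[OF recfun_comp3[OF recfun_ifz3 assms]]) (simp_all add: numeral_2_eq_2)

definition recpred :: "nat \<Rightarrow> (baire \<Rightarrow> nat list \<Rightarrow> bool) \<Rightarrow> bool" where
  "recpred k P \<longleftrightarrow> recfun k (\<lambda>p xs. if P p xs then 1 else 0)"

lemma recfun_if:
  "recpred k P \<Longrightarrow> recfun k A \<Longrightarrow> recfun k B \<Longrightarrow>
   recfun k (\<lambda>p xs. if P p xs then A p xs else B p xs)"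
  unfolding recpred_def by (drule recfun_ifz[of k _ B A]) (auto elim: recfun_cong)

lemma recpred_cong: "recpred k P \<Longrightarrow> (\<And>p xs. length xs = k \<Longrightarrow> P p xs = Q p xs) \<Longrightarrow> recpred k Q"
  unfolding recpred_def by (erule recfun_cong) auto

lemma recpred_less: assumes "recfun k F" "recfun k G" shows "recpred k (\<lambda>p xs. F p xs < G p xs)"
proof -
  have "recfun k (\<lambda>p xs. if G p xs - F p xs = 0 then 0 else 1)"
    by (rule recfun_ifz[OF recfun_sub[OF assms(2,1)] recfun_const recfun_const])
  then show ?thesis unfolding recpred_def by (rule recfun_cong) auto
qed
lemma recpred_not: assumes "recpred k P" shows "recpred k (\<lambda>p xs. \<not> P p xs)"
proof -
  have "recfun k (\<lambda>p xs. 1 - (if P p xs then 1 else 0))"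
    by (rule recfun_sub[OF recfun_const assms[unfolded recpred_def]])
  then show ?thesis unfolding recpred_def by (rule recfun_cong) auto
qed
lemma recpred_conj: assumes "recpred k P" "recpred k Q" shows "recpred k (\<lambda>p xs. P p xs \<and> Q p xs)"
proof -
  have "recfun k (\<lambda>p xs. (if P p xs then 1 else 0) * (if Q p xs then 1 else 0))"
    by (rule recfun_mult[OF assms[unfolded recpred_def]])
  then show ?thesis unfolding recpred_def by (rule recfun_cong) auto
qed
lemma recpred_le: assumes "recfun k F" "recfun k G" shows "recpred k (\<lambda>p xs. F p xs \<le> G p xs)"
  by (rule recpred_cong[OF recpred_not[OF recpred_less[OF assms(2,1)]]]) auto
lemma recpred_eq: assumes "recfun k F" "recfun k G" shows "recpred k (\<lambda>p xs. F p xs = G p xs)"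
  by (rule recpred_cong[OF recpred_conj[OF recpred_le[OF assms] recpred_le[OF assms(2,1)]]]) auto
lemma recpred_comp: "recpred m P \<Longrightarrow> length Gs = m \<Longrightarrow> \<forall>G\<in>set Gs. recfun k G \<Longrightarrow>
   recpred k (\<lambda>p xs. P p (map (\<lambda>G. G p xs) Gs))"
  unfolding recpred_def by (drule (2) recfun_comp) simp
lemma recpred_permute: "recpred m P \<Longrightarrow> length is = m \<Longrightarrow> \<forall>i\<in>set is. i < k \<Longrightarrow>
   recpred k (\<lambda>p xs. P p (map (\<lambda>i. xs!i) is))"
  unfolding recpred_def by (drule (2) recfun_permute) simp

lemma recpred_least:
  assumes "recpred (Suc k) P"
  shows "\<exists>e. \<forall>p xs. length xs = k \<longrightarrow> (\<exists>n. P p (n # xs)) \<longrightarrow>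
           ev p (Mu e) xs (LEAST n. P p (n # xs))"
proof -
  obtain e where e: "\<forall>p xs. length xs = Suc k \<longrightarrow> ev p e xs (if \<not> P p xs then 1 else 0)"
    using recpred_not[OF assms] unfolding recpred_def recfun_def by blast
  show ?thesis
  proof (intro exI allI impI)
    fix p and xs :: "nat list" assume xs: "length xs = k" and ex: "\<exists>n. P p (n # xs)"
    show "ev p (Mu e) xs (LEAST n. P p (n # xs))"
    proof (rule ev_mu)
      show "ev p e ((LEAST n. P p (n # xs)) # xs) 0"
        using e[rule_format, of "(LEAST n. P p (n # xs)) # xs" p] xs LeastI_ex[OF ex] by simp
      show "\<forall>m<LEAST n. P p (n # xs). \<exists>y. ev p e (m # xs) (Suc y)"
      proof (intro allI impI exI)
        fix m assume "m < (LEAST n. P p (n # xs))"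
        then have "\<not> P p (m # xs)" by (rule not_less_Least)
        then show "ev p e (m # xs) (Suc 0)" using e[rule_format, of "m # xs" p] xs by simp
      qed
    qed
  qed
qed

lemma map_nth_shift2: "length ys = k \<Longrightarrow> map (\<lambda>i. (a # b # ys) ! i) [2..<k + 2] = ys"
  by (rule nth_equalityI) (simp_all del: upt_Suc add: nth_upt)

primrec bounded_least :: "(nat \<Rightarrow> bool) \<Rightarrow> nat \<Rightarrow> nat" where
  "bounded_least P 0 = 0"
| "bounded_least P (Suc t) =
     (if bounded_least P t < t then bounded_least P t else if P t then t else Suc t)"

lemma bounded_least_eq: "bounded_least P n = (if \<exists>m<n. P m then LEAST m. P m else n)"
proof (induction n)
  case 0 then show ?case by simp
next
  case (Suc n)
  show ?case
  proof (cases "\<exists>m<n. P m")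
    case True
    then have "(LEAST m. P m) < n" by (meson LeastI_ex not_less_Least order.strict_trans2 not_le)
    moreover have "\<exists>m<Suc n. P m" using True less_SucI by blast
    ultimately show ?thesis using Suc True by simp
  next
    case False
    then have "P n \<Longrightarrow> (LEAST m. P m) = n" by (metis Least_equality not_le_imp_less)
    then show ?thesis using Suc False by (auto simp: less_Suc_eq)
  qed
qed

lemma bounded_least_holds: "bounded_least P (Suc k) \<le> k \<Longrightarrow> P (bounded_least P (Suc k))"
  by (auto simp: bounded_least_eq split: if_splits intro: LeastI)

lemma recfun_bounded_least:
  "recpred (Suc k) P \<Longrightarrow> recfun (Suc k) (\<lambda>p xs. bounded_least (\<lambda>m. P p (m # tl xs)) (xs!0))"
proof -
  assume P: "recpred (Suc k) P"
  have P': "recpred (Suc (Suc k)) (\<lambda>p zs. P p (map (\<lambda>i. zs!i) (0 # [2..<k+2])))"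
    by (rule recpred_permute[OF P]) auto
  define S where "S = (\<lambda>p zs. if zs!1 < zs!0 then zs!1 else
                            if P p (map (\<lambda>i. zs!i) (0 # [2..<k+2])) then zs!0 else Suc (zs!0))"
  have "recfun (Suc (Suc k)) S"
    unfolding S_def
    by (rule recfun_if[OF recpred_less[OF recfun_proj recfun_proj] recfun_proj
          recfun_if[OF P' recfun_proj recfun_succ[OF recfun_proj]]]) simp_all
  then have R: "recfun (Suc k) (\<lambda>p xs. prim_rec (\<lambda>ys. 0) (S p) (hd xs) (tl xs))"
    by (rule recfun_prim_rec[OF recfun_zero])
  have E: "length ys = k \<Longrightarrow> prim_rec (\<lambda>ys. 0) (S p) n ys = bounded_least (\<lambda>m. P p (m # ys)) n"
    for p n ys
  proof (induction n)
    case (Suc n)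
    have "map (\<lambda>i. (n # r # ys) ! i) [2..<k+2] = ys" for r
      using Suc.prems by (rule map_nth_shift2)
    then show ?case using Suc by (simp add: S_def)
  qed simp
  show ?thesis
  proof (rule recfun_cong[OF R], goal_cases)
    case (1 p xs)
    then obtain y ys where xs: "xs = y # ys" and l: "length ys = k" by (cases xs) auto
    show ?case
      unfolding xs list.sel nth_Cons_0 by (rule E[OF l])
  qed
qed

primrec bounded_greatest :: "(nat \<Rightarrow> bool) \<Rightarrow> nat \<Rightarrow> nat" where
  "bounded_greatest Q 0 = 0"
| "bounded_greatest Q (Suc t) = (if Q (Suc t) then Suc t else bounded_greatest Q t)"

lemma bounded_greatest_holds: "i \<le> n \<Longrightarrow> Q i \<Longrightarrow> Q (bounded_greatest Q n)"
  by (induction n) (auto simp: le_Suc_eq)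
lemma bounded_greatest_ge: "i \<le> n \<Longrightarrow> Q i \<Longrightarrow> i \<le> bounded_greatest Q n"
  by (induction n) (auto simp: le_Suc_eq)

lemma recfun_bounded_greatest:
  "recpred (Suc k) P \<Longrightarrow> recfun (Suc k) (\<lambda>p xs. bounded_greatest (\<lambda>m. P p (m # tl xs)) (xs!0))"
proof -
  assume P: "recpred (Suc k) P"
  have P': "recpred (Suc (Suc k)) (\<lambda>p zs. P p (Suc (zs!0) # map (\<lambda>i. zs!i) [2..<k+2]))"
  proof -
    have "recpred (Suc (Suc k))
            (\<lambda>p zs. P p (map (\<lambda>G. G p zs) ((\<lambda>p zs. Suc (zs!0)) # map (\<lambda>i p zs. zs!i) [2..<k+2])))"
      by (rule recpred_comp[OF P]) (auto intro: recfun_succ recfun_proj)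
    then show ?thesis by (rule recpred_cong) (simp add: comp_def)
  qed
  define S where
    "S = (\<lambda>p zs. if P p (Suc (zs!0) # map (\<lambda>i. zs!i) [2..<k+2]) then Suc (zs!0) else zs!1)"
  have "recfun (Suc (Suc k)) S"
    unfolding S_def by (rule recfun_if[OF P' recfun_succ[OF recfun_proj] recfun_proj]) simp_all
  then have R: "recfun (Suc k) (\<lambda>p xs. prim_rec (\<lambda>ys. 0) (S p) (hd xs) (tl xs))"
    by (rule recfun_prim_rec[OF recfun_zero])
  have E: "length ys = k \<Longrightarrow> prim_rec (\<lambda>ys. 0) (S p) n ys = bounded_greatest (\<lambda>m. P p (m # ys)) n"
    for p n ys
  proof (induction n)
    case (Suc n)
    have "map (\<lambda>i. (n # r # ys) ! i) [2..<k+2] = ys" for r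
      using Suc.prems by (rule map_nth_shift2)
    then show ?case using Suc by (simp add: S_def)
  qed simp
  show ?thesis
  proof (rule recfun_cong[OF R], goal_cases)
    case (1 p xs)
    then obtain y ys where xs: "xs = y # ys" and l: "length ys = k" by (cases xs) auto
    show ?case
      unfolding xs list.sel nth_Cons_0 by (rule E[OF l])
  qed
qed

lemma prim_rec_triangle: "prim_rec (\<lambda>ys. 0) (\<lambda>zs. Suc (zs ! Suc 0 + zs ! 0)) t ys = triangle t"
  by (induction t) auto

lemma recfun_triangle: assumes "recfun k F" shows "recfun k (\<lambda>p xs. triangle (F p xs))"
proof -
  have "recfun 2 (\<lambda>p zs. zs!1 + Suc (zs!0))"
    by (rule recfun_add[OF recfun_proj recfun_succ[OF recfun_proj]]) simp_all
  then have "recfun 1 (\<lambda>p xs. prim_rec (\<lambda>ys. 0) (\<lambda>zs. zs!1 + Suc (zs!0)) (hd xs) (tl xs))"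
    using recfun_prim_rec[of 0 "\<lambda>p ys. 0" "\<lambda>p zs. zs!1 + Suc (zs!0)"]
      by (simp add: numeral_2_eq_2 recfun_zero)
  then have "recfun 1 (\<lambda>p xs. triangle (xs!0))"
    by (rule recfun_cong) (auto simp: length_Suc_conv prim_rec_triangle)
  from recfun_comp1[OF this assms] show ?thesis by simp
qed

lemma recfun_prod_encode:
  assumes "recfun k F" "recfun k G"
  shows "recfun k (\<lambda>p xs. prod_encode (F p xs, G p xs))"
  unfolding prod_encode_def by (simp, intro recfun_add recfun_triangle assms)

definition decode_sum :: "nat \<Rightarrow> nat" where
  "decode_sum m = bounded_least (\<lambda>s. m < triangle (Suc s)) (Suc m)"

lemma le_triangle: "m \<le> triangle m"
  by (induction m) auto

lemma prod_decode_eq_decode_sum: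
  "prod_decode m = (m - triangle (decode_sum m), decode_sum m - (m - triangle (decode_sum m)))"
proof -
  define s where "s = decode_sum m"
  have ex: "\<exists>t<Suc m. m < triangle (Suc t)"
    using le_triangle[of "Suc m"] by (intro exI[of _ m]) auto
  have s: "s = (LEAST t. m < triangle (Suc t))" unfolding s_def decode_sum_def bounded_least_eq
    using ex
    by simp
  have s1: "m < triangle (Suc s)" unfolding s using ex by (metis LeastI)
  have s2: "triangle s \<le> m"
  proof (cases s)
    case (Suc s') then have "\<not> m < triangle (Suc s')" using s not_less_Least by (metis lessI)
    then show ?thesis using Suc by simp
  qed simp
  have "prod_encode (m - triangle s, s - (m - triangle s)) = m"
    using s1 s2 unfolding prod_encode_def by auto
  then have "prod_decode m = (m - triangle s, s - (m - triangle s))"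
    by (metis prod_encode_inverse)
  then show ?thesis unfolding s_def .
qed

lemma recfun_decode_sum: assumes "recfun k F" shows "recfun k (\<lambda>p xs. decode_sum (F p xs))"
proof -
  have "recpred 2 (\<lambda>p xs. xs!1 < triangle (Suc (xs!0)))"
    by (rule recpred_less[OF recfun_proj recfun_triangle[OF recfun_succ[OF recfun_proj]]]) auto
  from recfun_bounded_least[OF this[unfolded numeral_2_eq_2]]
  have "recfun 2 (\<lambda>p xs. bounded_least (\<lambda>s. xs!1 < triangle (Suc s)) (xs!0))"
    by (simp add: numeral_2_eq_2) (erule recfun_cong, auto simp: length_Suc_conv)
  from recfun_comp2[OF this recfun_succ[OF recfun_proj, of 0 1] recfun_proj[of 0 1]]
  have "recfun 1 (\<lambda>p xs. decode_sum (xs!0))" by (simp add: decode_sum_def)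
  from recfun_comp1[OF this assms] show ?thesis by simp
qed

lemma recfun_fst_prod_decode:
  assumes "recfun k F"
  shows "recfun k (\<lambda>p xs. fst (prod_decode (F p xs)))"
  unfolding prod_decode_eq_decode_sum
    by (simp, intro recfun_sub recfun_triangle recfun_decode_sum assms)
lemma recfun_snd_prod_decode:
  assumes "recfun k F"
  shows "recfun k (\<lambda>p xs. snd (prod_decode (F p xs)))"
  unfolding prod_decode_eq_decode_sum
    by (simp, intro recfun_sub recfun_triangle recfun_decode_sum assms)

lemma computable_recfun: "recfun 1 F \<Longrightarrow> computable (\<lambda>p. Some (\<lambda>n. F p [n]))"
  unfolding computable_def recfun_def by force

fun subst_oracle :: "recf \<Rightarrow> recf \<Rightarrow> recf" where
  "subst_oracle d Orac = Comp d [Proj 0]"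
| "subst_oracle d (Comp f gs) = Comp (subst_oracle d f) (map (subst_oracle d) gs)"
| "subst_oracle d (Prec f g) = Prec (subst_oracle d f) (subst_oracle d g)"
| "subst_oracle d (Mu f) = Mu (subst_oracle d f)"
| "subst_oracle d e = e"

lemma ev_subst_oracle:
  assumes "ev q e xs z" and d: "\<forall>m. ev p d [m] (q m)"
  shows "ev p (subst_oracle d e) xs z"
  using assms(1)
proof (induction rule: ev.induct)
  case (ev_orac x xs)
  have "ev p (Proj 0) (x # xs) x" using ev.ev_proj[of 0 "x # xs" p] by simp
  then show ?case by (auto intro!: ev_comp[where ys="[x]"] d[rule_format])
qed (auto intro: ev.intros)

lemma computable_bind:
  assumes "computable F" and "computable G"
  shows "computable (\<lambda>p. Option.bind (F p) G)"
proof -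
  obtain d where d: "\<forall>p q. F p = Some q \<longrightarrow> (\<forall>n. ev p d [n] (q n))"
    using assms(1) unfolding computable_def by blast
  obtain e where e: "\<forall>q r. G q = Some r \<longrightarrow> (\<forall>n. ev q e [n] (r n))"
    using assms(2) unfolding computable_def by blast
  show ?thesis
    unfolding computable_def
    by (rule exI[of _ "subst_oracle d e"])
       (auto simp: bind_eq_Some_conv intro: ev_subst_oracle dest: d[rule_format] e[rule_format])
qed

lemma computable_Some: "computable Some"
  unfolding computable_def by (auto intro: ev_orac[where xs="[]", simplified])

lemma computable_Suc: "computable (\<lambda>p. Some (\<lambda>n. Suc (p n)))"
  using computable_recfun[OF recfun_succ[OF recfun_orac[OF recfun_proj[of 0 1]]]] by simp

section \<open>Limits and stagewise evaluation\<close>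

lemma lim_conv_unique: "lim_conv w q \<Longrightarrow> lim_conv w q' \<Longrightarrow> q = q'"
proof (rule ext)
  fix j assume a: "lim_conv w q" "lim_conv w q'"
  obtain N where N: "\<forall>i\<ge>N. w (prod_encode (i, j)) = q j" using a(1) unfolding lim_conv_def by blast
  obtain N' where N': "\<forall>i\<ge>N'. w (prod_encode (i, j)) = q' j" using a(2) unfolding lim_conv_def
    by blast
  show "q j = q' j" using N[rule_format, of "max N N'"] N'[rule_format, of "max N N'"] by simp
qed

lemma baire_lim_eq: "lim_conv w q \<Longrightarrow> baire_lim w = Some q"
  unfolding baire_lim_def using lim_conv_unique by (auto intro!: the_equality)

lemma baire_lim_Some: "baire_lim w = Some q \<Longrightarrow> lim_conv w q"
  unfolding baire_lim_def by (auto split: if_splits) (metis (mono_tags) lim_conv_unique theI)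

lemma lim_conv_iff_eventually:
  "lim_conv w u \<longleftrightarrow> (\<forall>j. eventually (\<lambda>i. w (prod_encode (i, j)) = u j) sequentially)"
  unfolding lim_conv_def eventually_sequentially ..

lemma jump_rep_eq: "lim_conv w u \<Longrightarrow> jump_rep \<delta> w = \<delta> u"
  unfolding jump_rep_def by (simp add: baire_lim_eq)

lemma jump_rep_Some: "jump_rep \<delta> w = Some x \<Longrightarrow> \<exists>u. lim_conv w u \<and> \<delta> u = Some x"
  unfolding jump_rep_def by (cases "baire_lim w") (auto dest: baire_lim_Some)

text \<open>Stage \<open>n\<close> of a computation relative to the limit of \<open>w\<close>: oracle queries are answered
  from row \<open>n\<close> and \<open>\<mu>\<close>-search is cut off at \<open>n\<close>.\<close>

function stage_eval :: "baire \<Rightarrow> nat \<Rightarrow> recf \<Rightarrow> nat list \<Rightarrow> nat" where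
  "stage_eval w n Zero xs = 0"
| "stage_eval w n Succ xs = Suc (nth_default 0 xs 0)"
| "stage_eval w n (Proj i) xs = nth_default 0 xs i"
| "stage_eval w n Orac xs = w (prod_encode (n, nth_default 0 xs 0))"
| "stage_eval w n (Comp f gs) xs = stage_eval w n f (map (\<lambda>g. stage_eval w n g xs) gs)"
| "stage_eval w n (Prec f g) [] = 0"
| "stage_eval w n (Prec f g) (0 # ys) = stage_eval w n f ys"
| "stage_eval w n (Prec f g) (Suc m # ys) =
     stage_eval w n g (m # stage_eval w n (Prec f g) (m # ys) # ys)"
| "stage_eval w n (Mu f) xs = bounded_least (\<lambda>m. stage_eval w n f (m # xs) = 0) n"
  by pat_completeness auto
termination
  by (relation "measures [\<lambda>(w,n,e,xs). size e, \<lambda>(w,n,e,xs). case xs of [] \<Rightarrow> 0 | m # _ \<Rightarrow> m]")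
     (auto intro!: le_imp_less_Suc trans_le_add1 size_list_estimation')

lemma map_nth_shift3: "length ys = k \<Longrightarrow> map (\<lambda>i. (a # b # c # ys) ! i) [3..<k + 3] = ys"
  by (rule nth_equalityI) (simp_all del: upt_Suc add: nth_upt)

lemma recfun_nth_default: "recfun (Suc k) (\<lambda>w xs. nth_default 0 (tl xs) i)"
proof (cases "i < k")
  case True
  have "recfun (Suc k) (\<lambda>w xs. xs ! Suc i)" using True by (intro recfun_proj) simp
  then show ?thesis by (rule recfun_cong) (use True in \<open>auto simp: nth_default_def length_Suc_conv\<close>)
next
  case False
  show ?thesis by (rule recfun_cong[OF recfun_zero]) (auto simp: nth_default_def False)
qed

lemma recfun_stage_eval_Prec:
  assumes f: "\<And>k. recfun (Suc k) (\<lambda>w xs. stage_eval w (xs!0) f (tl xs))"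
    and g: "\<And>k. recfun (Suc k) (\<lambda>w xs. stage_eval w (xs!0) g (tl xs))"
  shows "recfun (Suc k) (\<lambda>w xs. stage_eval w (xs!0) (Prec f g) (tl xs))"
proof (cases k)
  case 0
  show ?thesis by (rule recfun_cong[OF recfun_zero]) (auto simp: 0 length_Suc_conv)
next
  case (Suc k')
  define F where "F = (\<lambda>w (ys::nat list). stage_eval w (ys!0) f (tl ys))"
  define G where
    "G = (\<lambda>w (zs::nat list). stage_eval w (zs!2) g (zs!0 # zs!1 # map (\<lambda>i. zs!i) [3..<k'+3]))"
  have G_rec: "recfun (Suc (Suc (Suc k'))) G"
  proof -
    have "recfun (Suc (Suc (Suc k')))
            (\<lambda>w zs. (\<lambda>w ys. stage_eval w (ys!0) g (tl ys)) w
                       (map (\<lambda>i. zs!i) (2 # 0 # 1 # [3..<k'+3])))"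
      by (rule recfun_permute[OF g]) auto
    then show ?thesis unfolding G_def by (rule recfun_cong) simp
  qed
  have "recfun (Suc (Suc k')) (\<lambda>w xs. prim_rec (F w) (G w) (hd xs) (tl xs))"
    by (rule recfun_prim_rec[OF f[of k', folded F_def] G_rec])
  then have R: "recfun (Suc (Suc k'))
      (\<lambda>w xs. (\<lambda>w xs. prim_rec (F w) (G w) (hd xs) (tl xs)) w
                 (map (\<lambda>i. xs!i) (1 # 0 # [2..<k'+2])))"
    by (rule recfun_permute) auto
  have E: "length ys = k' \<Longrightarrow> prim_rec (F w) (G w) m (n # ys) = stage_eval w n (Prec f g) (m # ys)"
    for w m n ys
  proof (induction m)
    case 0 then show ?case by (simp add: F_def)
  next
    case (Suc m)
    have "map (\<lambda>i. (m # prim_rec (F w) (G w) m (n # ys) # n # ys) ! i) [3..<k'+3] = ys"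
      by (rule map_nth_shift3) (use Suc.prems in simp)
    then show ?case using Suc by (simp del: upt_Suc add: G_def)
  qed
  show ?thesis unfolding Suc
  proof (rule recfun_cong[OF R], goal_cases)
    case (1 w xs)
    then obtain n m ys where xs: "xs = n # m # ys" and l: "length ys = k'"
      by (auto simp: length_Suc_conv)
    have "map (\<lambda>i. (n # m # ys) ! i) [2..<k'+2] = ys" by (rule map_nth_shift2[OF l])
    then show ?case unfolding xs using E[OF l] by (simp del: upt_Suc)
  qed
qed

lemma recfun_stage_eval_Mu:
  assumes f: "\<And>k. recfun (Suc k) (\<lambda>w xs. stage_eval w (xs!0) f (tl xs))"
  shows "recfun (Suc k) (\<lambda>w xs. stage_eval w (xs!0) (Mu f) (tl xs))"
proof -
  define P where
    "P = (\<lambda>w (zs::nat list). stage_eval w (zs!1) f (zs!0 # map (\<lambda>i. zs!i) [2..<k+2]) = 0)"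
  have P: "recpred (Suc (Suc k)) P"
  proof -
    have "recfun (Suc (Suc k))
            (\<lambda>w zs. (\<lambda>w ys. stage_eval w (ys!0) f (tl ys)) w (map (\<lambda>i. zs!i) (1 # 0 # [2..<k+2])))"
      by (rule recfun_permute[OF f]) auto
    from recpred_eq[OF this recfun_zero] show ?thesis unfolding P_def by (rule recpred_cong) simp
  qed
  have "recfun (Suc (Suc k)) (\<lambda>w zs. bounded_least (\<lambda>m. P w (m # tl zs)) (zs!0))"
    by (rule recfun_bounded_least[OF P])
  then have R: "recfun (Suc k)
      (\<lambda>w xs. (\<lambda>w zs. bounded_least (\<lambda>m. P w (m # tl zs)) (zs!0)) w
                 (map (\<lambda>i. xs!i) (0 # [0..<Suc k])))"
    by (rule recfun_permute) auto
  show ?thesis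
  proof (rule recfun_cong[OF R], goal_cases)
    case (1 w xs)
    then obtain n ys where xs: "xs = n # ys" and l: "length ys = k"
      by (auto simp: length_Suc_conv)
    have "map (\<lambda>i. xs ! i) [0..<Suc k] = xs" using 1 map_nth[of xs] by simp
    moreover have "map (\<lambda>i. (m # n # ys) ! i) [2..<k+2] = ys" for m by (rule map_nth_shift2[OF l])
    ultimately show ?case unfolding xs by (simp del: upt_Suc add: P_def)
  qed
qed

lemma recfun_stage_eval: "recfun (Suc k) (\<lambda>w xs. stage_eval w (xs!0) e (tl xs))"
proof (induction e arbitrary: k)
  case Zero
  show ?case by (rule recfun_cong[OF recfun_zero]) simp
next
  case Succ
  show ?case by (rule recfun_cong[OF recfun_succ[OF recfun_nth_default]]) simp
next
  case (Proj i)
  show ?case by (rule recfun_cong[OF recfun_nth_default]) simp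
next
  case Orac
  show ?case
    by (rule recfun_cong[OF recfun_orac[OF recfun_prod_encode[OF recfun_proj recfun_nth_default]]])
       simp_all
next
  case (Comp f gs)
  have "recfun (Suc k) (\<lambda>w xs. (\<lambda>w ys. stage_eval w (ys!0) f (tl ys)) w (map (\<lambda>G. G w xs)
          ((\<lambda>w xs. xs!0) # map (\<lambda>g w xs. stage_eval w (xs!0) g (tl xs)) gs)))"
    by (rule recfun_comp[OF Comp.IH(1)[of "length gs"]]) (auto intro: recfun_proj Comp.IH(2))
  then show ?case by (rule recfun_cong) (simp add: comp_def)
next
  case (Prec f g)
  then show ?case by (rule recfun_stage_eval_Prec)
next
  case (Mu f)
  then show ?case by (rule recfun_stage_eval_Mu)
qed

lemma stage_eval_converges:
  assumes "ev u e xs z" and lc: "lim_conv w u"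
  shows "eventually (\<lambda>n. stage_eval w n e xs = z) sequentially"
  using assms(1)
proof (induction rule: ev.induct)
  case (ev_zero xs) then show ?case by simp
next
  case (ev_succ x xs) then show ?case by (simp add: nth_default_def)
next
  case (ev_proj i xs) then show ?case by (simp add: nth_default_def)
next
  case (ev_orac x xs)
  from lc obtain N where "\<forall>i\<ge>N. w (prod_encode (i, x)) = u x" unfolding lim_conv_def by blast
  then show ?case by (auto simp: nth_default_def eventually_sequentially)
next
  case (ev_comp ys gs xs f z)
  have "eventually (\<lambda>n. \<forall>i\<in>{..<length gs}. stage_eval w n (gs ! i) xs = ys ! i) sequentially"
    using ev_comp.IH(1) by (intro eventually_ball_finite) auto
  then have "eventually (\<lambda>n. map (\<lambda>g. stage_eval w n g xs) gs = ys) sequentially"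
    by eventually_elim (use ev_comp.hyps(1) in \<open>auto intro!: nth_equalityI\<close>)
  then show ?case using ev_comp.IH(2) by eventually_elim simp
next
  case (ev_prec0 f xs y g) then show ?case by simp
next
  case (ev_precS f g n xs y z)
  from ev_precS.IH show ?case by eventually_elim simp
next
  case (ev_mu f n xs)
  have "\<forall>m<n. eventually (\<lambda>k. stage_eval w k f (m # xs) \<noteq> 0) sequentially"
  proof (intro allI impI)
    fix m assume "m < n"
    then obtain y where "eventually (\<lambda>k. stage_eval w k f (m # xs) = Suc y) sequentially"
      using ev_mu.IH(2) by blast
    then show "eventually (\<lambda>k. stage_eval w k f (m # xs) \<noteq> 0) sequentially" by eventually_elim simp
  qed
  then have "eventually (\<lambda>k. \<forall>m\<in>{..<n}. stage_eval w k f (m # xs) \<noteq> 0) sequentially"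
    by (intro eventually_ball_finite) auto
  moreover have "eventually (\<lambda>k. n < k) sequentially" by (rule eventually_gt_at_top)
  ultimately show ?case using ev_mu.IH(1)
  proof eventually_elim
    case (elim k)
    have "(LEAST m. stage_eval w k f (m # xs) = 0) = n"
      by (rule Least_equality) (use elim in \<open>force simp: not_less[symmetric]\<close>)+
    then show ?case using elim by (auto simp: bounded_least_eq)
  qed
qed

definition lim_lift :: "recf \<Rightarrow> baire \<Rightarrow> baire" where
  "lim_lift e w m = stage_eval w (fst (prod_decode m)) e [snd (prod_decode m)]"

lemma computable_lim_lift: "computable (\<lambda>w. Some (lim_lift e w))"
proof -
  have "recfun 2 (\<lambda>w xs. stage_eval w (xs!0) e (tl xs))"
    using recfun_stage_eval[of 1 e] by (simp add: numeral_2_eq_2)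
  from recfun_comp2[OF this recfun_fst_prod_decode[OF recfun_proj[of 0 1]]
      recfun_snd_prod_decode[OF recfun_proj[of 0 1]]]
  show ?thesis using computable_recfun unfolding lim_lift_def by fastforce
qed

lemma lim_conv_lim_lift:
  assumes e: "\<forall>n. ev u e [n] (v n)" and lc: "lim_conv w u"
  shows "lim_conv (lim_lift e w) v"
  unfolding lim_conv_def lim_lift_def
proof
  fix j
  from stage_eval_converges[OF e[rule_format, of j] lc]
  show "\<exists>N. \<forall>i\<ge>N. stage_eval w (fst (prod_decode (prod_encode (i, j)))) e
                      [snd (prod_decode (prod_encode (i, j)))] = v j"
    unfolding eventually_sequentially by simp
qed

lemma computable_limit_lift:
  assumes "computable K"
  obtains L where "computable (\<lambda>w. Some (L w))"
    and "\<And>w u v. lim_conv w u \<Longrightarrow> K u = Some v \<Longrightarrow> lim_conv (L w) v"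
proof -
  obtain e where "\<forall>u v. K u = Some v \<longrightarrow> (\<forall>n. ev u e [n] (v n))"
    using assms unfolding computable_def by blast
  then show thesis
    using that[OF computable_lim_lift] lim_conv_lim_lift by blast
qed

section \<open>Names in the completion\<close>

primrec count_pos :: "baire \<Rightarrow> nat \<Rightarrow> nat" where
  "count_pos p 0 = 0"
| "count_pos p (Suc n) = count_pos p n + (if 0 < p n then 1 else 0)"

definition nth_pos :: "baire \<Rightarrow> nat \<Rightarrow> nat \<Rightarrow> nat" where
  "nth_pos p n k = bounded_least (\<lambda>i. 0 < p i \<and> count_pos p i = k) n"

lemma count_pos_mono: "n \<le> n' \<Longrightarrow> count_pos p n \<le> count_pos p n'"
  by (induction n' rule: dec_induct) auto

lemma count_pos_le: "count_pos p n \<le> n"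
  by (induction n) auto

lemma less_count_pos_imp_ex: "k < count_pos p n \<Longrightarrow> \<exists>i<n. 0 < p i \<and> count_pos p i = k"
proof (induction n)
  case (Suc n)
  show ?case
  proof (cases "k < count_pos p n")
    case True then show ?thesis using Suc.IH by (meson less_SucI)
  next
    case False
    then have "0 < p n" "k = count_pos p n" using Suc.prems by (auto split: if_splits)
    then show ?thesis by blast
  qed
qed simp

lemma count_pos_strict_mono: "i < i' \<Longrightarrow> 0 < p i \<Longrightarrow> count_pos p i < count_pos p i'"
proof -
  assume "i < i'" "0 < p i"
  then have "count_pos p (Suc i) \<le> count_pos p i'" by (intro count_pos_mono) simp
  then show ?thesis using \<open>0 < p i\<close> by simp
qed

lemma count_pos_inj: "0 < p i \<Longrightarrow> 0 < p i' \<Longrightarrow> count_pos p i = count_pos p i' \<Longrightarrow> i = i'"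
  by (metis count_pos_strict_mono less_irrefl linorder_neqE_nat)

lemma enumerate_eq_strict_mono:
  assumes S: "infinite S" and h: "strict_mono h" and r: "range h = S"
  shows "enumerate S k = h k"
proof (induction k)
  case 0
  show ?case unfolding enumerate_0
  proof (rule Least_equality)
    show "h 0 \<in> S" using r by auto
    fix y assume "y \<in> S" then obtain m where "y = h m" using r by auto
    then show "h 0 \<le> y" using h by (simp add: strict_mono_less_eq)
  qed
next
  case (Suc k)
  show ?case unfolding enumerate_Suc''[OF S] Suc
  proof (rule Least_equality)
    show "h (Suc k) \<in> S \<and> h k < h (Suc k)" using r h by (auto simp: strict_mono_less)
    fix y assume "y \<in> S \<and> h k < y"
    then obtain m where "y = h m" "h k < h m" using r by auto
    then show "h (Suc k) \<le> y" using h by (simp add: strict_mono_less strict_mono_less_eq)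
  qed
qed

lemma enumerate_UNIV_nat: "enumerate (UNIV :: nat set) k = k"
  by (rule enumerate_eq_strict_mono) (auto simp: strict_mono_def)

lemma minus_one_Suc: "minus_one (\<lambda>k. Suc (t k)) = Some t"
  unfolding minus_one_def by (simp add: enumerate_UNIV_nat)

lemma minus_one_pad:
  assumes h: "strict_mono h" and at: "\<And>j. u (h j) = t j" and off: "\<And>k. k \<notin> range h \<Longrightarrow> u k = 0"
  shows "minus_one u = minus_one t"
proof -
  define T where "T = {j. 0 < t j}"
  have U: "{k. 0 < u k} = h ` T"
  proof
    show "{k. 0 < u k} \<subseteq> h ` T"
    proof
      fix k assume "k \<in> {k. 0 < u k}"
      then have "k \<in> range h" using off by force
      then obtain j where "k = h j" by auto
      then show "k \<in> h ` T" using \<open>k \<in> {k. 0 < u k}\<close> at unfolding T_def by auto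
    qed
    show "h ` T \<subseteq> {k. 0 < u k}" using at unfolding T_def by auto
  qed
  have inj: "inj h" using h by (rule strict_mono_imp_inj_on)
  have fin: "finite (h ` T) = finite T" using inj by (simp add: finite_image_iff inj_on_subset)
  show ?thesis
  proof (cases "finite T")
    case True then show ?thesis unfolding minus_one_def U T_def[symmetric] using fin by simp
  next
    case False
    have e: "enumerate (h ` T) k = h (enumerate T k)" for k
    proof (rule enumerate_eq_strict_mono)
      show "infinite (h ` T)" using fin False by simp
      show "strict_mono (\<lambda>k. h (enumerate T k))"
        using h strict_mono_enumerate[OF False] by (simp add: strict_mono_def)
      show "range (\<lambda>k. h (enumerate T k)) = h ` T"
        using range_enumerate[OF False] by (metis image_image)
    qed
    show ?thesis unfolding minus_one_def U T_def[symmetric] using fin False by (simp add: e at)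
  qed
qed

lemma count_pos_card: "count_pos p n = card {i. i < n \<and> 0 < p i}"
proof (induction n)
  case (Suc n)
  have "{i. i < Suc n \<and> 0 < p i} = {i. i < n \<and> 0 < p i} \<union> (if 0 < p n then {n} else {})"
    by (auto simp: less_Suc_eq)
  then show ?case using Suc by (simp add: card_insert_if)
qed simp

lemma count_pos_enumerate:
  assumes S: "infinite {i. 0 < p i}"
  shows "count_pos p (enumerate {i. 0 < p i} k) = k"
proof -
  let ?S = "{i. 0 < p i}"
  have "{i. i < enumerate ?S k \<and> 0 < p i} = enumerate ?S ` {..<k}"
  proof
    show "{i. i < enumerate ?S k \<and> 0 < p i} \<subseteq> enumerate ?S ` {..<k}"
    proof
      fix i assume i: "i \<in> {i. i < enumerate ?S k \<and> 0 < p i}"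
      then have "i \<in> range (enumerate ?S)" using range_enumerate[OF S] by auto
      then obtain m where m: "i = enumerate ?S m" by auto
      then have "m < k" using i S by simp
      then show "i \<in> enumerate ?S ` {..<k}" using m by auto
    qed
    show "enumerate ?S ` {..<k} \<subseteq> {i. i < enumerate ?S k \<and> 0 < p i}"
      using S enumerate_in_set[OF S] by auto
  qed
  moreover have "inj_on (enumerate ?S) {..<k}" using inj_enumerate[OF S] by (simp add: inj_on_def)
  ultimately show ?thesis unfolding count_pos_card by (simp add: card_image)
qed

lemma Least_count_pos_eq_enumerate:
  assumes S: "infinite {i. 0 < p i}"
  shows "(LEAST i. 0 < p i \<and> count_pos p i = k) = enumerate {i. 0 < p i} k"
proof (rule Least_equality)
  show "0 < p (enumerate {i. 0 < p i} k) \<and> count_pos p (enumerate {i. 0 < p i} k) = k"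
    using enumerate_in_set[OF S] count_pos_enumerate[OF S] by simp
  fix i assume "0 < p i \<and> count_pos p i = k"
  then have "i = enumerate {i. 0 < p i} k"
    using count_pos_inj enumerate_in_set[OF S] count_pos_enumerate[OF S] by (metis mem_Collect_eq)
  then show "enumerate {i. 0 < p i} k \<le> i" by simp
qed

lemma nth_pos_enumerate:
  assumes S: "infinite {i. 0 < p i}" and k: "k < count_pos p n"
  shows "nth_pos p n k = enumerate {i. 0 < p i} k"
proof -
  obtain i where "i < n" "0 < p i" "count_pos p i = k" using less_count_pos_imp_ex[OF k] by blast
  then show ?thesis
    unfolding nth_pos_def bounded_least_eq Least_count_pos_eq_enumerate[OF S, symmetric]
    by auto
qed

lemma recpred_pos: "recfun k F \<Longrightarrow> recpred k (\<lambda>p xs. 0 < F p xs)"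
  by (rule recpred_cong[OF recpred_less[OF recfun_zero]]) auto

lemma recfun_count_pos1: "recfun 1 (\<lambda>p xs. count_pos p (xs!0))"
proof -
  define G where "G = (\<lambda>(p::baire) (zs::nat list). zs!1 + (if 0 < p (zs!0) then 1 else 0))"
  have "recfun 2 G" unfolding G_def
    by (intro recfun_add recfun_proj recfun_if recpred_pos recfun_orac recfun_const) auto
  then have R: "recfun 1 (\<lambda>p xs. prim_rec (\<lambda>ys. 0) (G p) (hd xs) (tl xs))"
    using recfun_prim_rec[OF recfun_zero[of 0], of G] by (simp add: numeral_2_eq_2)
  have E: "prim_rec (\<lambda>ys. 0) (G p) n ys = count_pos p n" for p n ys
    by (induction n) (auto simp: G_def)
  show ?thesis by (rule recfun_cong[OF R]) (auto simp: E length_Suc_conv)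
qed

lemma recfun_count_pos: "recfun k F \<Longrightarrow> recfun k (\<lambda>p xs. count_pos p (F p xs))"
  using recfun_comp1[OF recfun_count_pos1] by simp

lemma recfun_nth_pos:
  assumes "recfun k N" "recfun k K"
  shows "recfun k (\<lambda>p xs. nth_pos p (N p xs) (K p xs))"
proof -
  have P: "recpred (Suc 1) (\<lambda>p xs. 0 < p (xs!0) \<and> count_pos p (xs!0) = xs!1)"
    by (intro recpred_conj recpred_pos recfun_orac recfun_proj recpred_eq recfun_count_pos) auto
  have "recfun 2 (\<lambda>p xs. bounded_least (\<lambda>m. 0 < p m \<and> count_pos p m = tl xs ! 0) (xs!0))"
    using recfun_bounded_least[OF P] by (simp add: numeral_2_eq_2)
  then have "recfun 2 (\<lambda>p xs. nth_pos p (xs!0) (xs!1))"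
    by (rule recfun_cong) (auto simp: nth_pos_def length_Suc_conv numeral_2_eq_2)
  from recfun_comp2[OF this assms] show ?thesis by simp
qed

lemma computable_minus_one: "computable minus_one"
proof -
  have "recpred (Suc 1) (\<lambda>p xs. 0 < p (xs!0) \<and> count_pos p (xs!0) = xs!1)"
    by (intro recpred_conj recpred_pos recfun_orac recfun_proj recpred_eq recfun_count_pos) auto
  from recpred_least[OF this] obtain e where e: "\<forall>p xs. length xs = 1 \<longrightarrow>
      (\<exists>n. 0 < p n \<and> count_pos p n = xs!0) \<longrightarrow>
      ev p (Mu e) xs (LEAST n. 0 < p n \<and> count_pos p n = xs!0)"
    by auto
  have "recfun 1 (\<lambda>p xs. p (xs!0) - 1)" by (intro recfun_pred recfun_orac recfun_proj) auto
  then obtain d where d: "\<forall>p xs. length xs = 1 \<longrightarrow> ev p d xs (p (xs!0) - 1)"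
    unfolding recfun_def by blast
  show ?thesis unfolding computable_def
  proof (intro exI[of _ "Comp d [Mu e]"] allI impI)
    fix p q n assume "minus_one p = Some q"
    then have S: "infinite {i. 0 < p i}" and q: "q = (\<lambda>k. p (enumerate {i. 0 < p i} k) - 1)"
      unfolding minus_one_def by (auto split: if_splits)
    have "ev p (Mu e) [n] (enumerate {i. 0 < p i} n)"
      using e[rule_format, of "[n]" p] Least_count_pos_eq_enumerate[OF S]
        count_pos_enumerate[OF S] enumerate_in_set[OF S] by fastforce
    then show "ev p (Comp d [Mu e]) [n] (q n)"
      using d[rule_format, of "[enumerate {i. 0 < p i} n]" p] q
      by (intro ev_comp[where ys="[enumerate {i. 0 < p i} n]"]) auto
  qed
qed

section \<open>Guessing a limit from a completion name\<close>

text \<open>After reading \<open>p\<close> up to \<open>n\<close>, the first \<open>count_pos p n\<close> entries of \<open>p - 1\<close> are known;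
  the guess for entry \<open>j\<close> of their limit is taken from the latest row containing it.\<close>

definition latest_row :: "baire \<Rightarrow> nat \<Rightarrow> nat \<Rightarrow> nat" where
  "latest_row p n j = bounded_greatest (\<lambda>i. prod_encode (i, j) < count_pos p n) n"
definition stage_guess :: "baire \<Rightarrow> nat \<Rightarrow> nat \<Rightarrow> nat" where
  "stage_guess p n j =
     (let k = prod_encode (latest_row p n j, j)
      in if k < count_pos p n then p (nth_pos p n k) - 1 else 0)"

lemma le_prod_encode: "i \<le> prod_encode (i, j)"
  unfolding prod_encode_def by simp

lemma stage_guess_converges:
  assumes "minus_one p = Some r" and "lim_conv r t"
  shows "eventually (\<lambda>n. stage_guess p n j = t j) sequentially"
proof -
  let ?S = "{i. 0 < p i}"
  have S: "infinite ?S" and lc: "lim_conv (\<lambda>k. p (enumerate ?S k) - 1) t"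
    using assms unfolding minus_one_def by (auto split: if_splits)
  obtain N0 where N0: "\<forall>i\<ge>N0. p (enumerate ?S (prod_encode (i, j))) - 1 = t j"
    using lc unfolding lim_conv_def by blast
  define K0 where "K0 = prod_encode (N0, j)"
  define n0 where "n0 = Suc (enumerate ?S K0)"
  have c0: "K0 < count_pos p n0" unfolding n0_def
    using count_pos_enumerate[OF S, of K0] enumerate_in_set[OF S, of K0]
    by simp
  have "stage_guess p n j = t j" if n: "n0 \<le> n" for n
  proof -
    have cn: "K0 < count_pos p n" using c0 count_pos_mono[OF n, of p] by simp
    have "N0 \<le> n" using cn count_pos_le[of p n] le_prod_encode[of N0 j] unfolding K0_def by simp
    define Q where "Q = (\<lambda>i. prod_encode (i, j) < count_pos p n)"
    have QN0: "Q N0" unfolding Q_def using cn K0_def by simp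
    have i1: "N0 \<le> latest_row p n j" unfolding latest_row_def Q_def[symmetric]
      by (rule bounded_greatest_ge[of N0 n Q, OF \<open>N0 \<le> n\<close> QN0])
    have i2: "Q (latest_row p n j)" unfolding latest_row_def Q_def[symmetric]
      by (rule bounded_greatest_holds[of N0 n Q, OF \<open>N0 \<le> n\<close> QN0])
    then have "stage_guess p n j = p (enumerate ?S (prod_encode (latest_row p n j, j))) - 1"
      unfolding stage_guess_def Let_def using nth_pos_enumerate[OF S] by (simp add: Q_def)
    also have "\<dots> = t j" using N0 i1 by blast
    finally show ?thesis .
  qed
  then show ?thesis unfolding eventually_sequentially by blast
qed

lemma recfun_latest_row:
  assumes "recfun k N" "recfun k J"
  shows "recfun k (\<lambda>p xs. latest_row p (N p xs) (J p xs))"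
proof -
  have P: "recpred (Suc 2) (\<lambda>p xs. prod_encode (xs!0, xs!1) < count_pos p (xs!2))"
    by (intro recpred_less recfun_prod_encode recfun_proj recfun_count_pos) auto
  from recfun_bounded_greatest[OF P]
  have "recfun 3 (\<lambda>p xs. bounded_greatest (\<lambda>m. prod_encode (m, tl xs ! 0) < count_pos p (tl xs ! 1))
                             (xs!0))"
    by (simp add: numeral_3_eq_3)
  then have "recfun 3
               (\<lambda>p xs. bounded_greatest (\<lambda>m. prod_encode (m, xs!1) < count_pos p (xs!2)) (xs!0))"
    by (rule recfun_cong) (auto simp: length_Suc_conv numeral_3_eq_3)
  from recfun_comp3[OF this assms(1) assms(2) assms(1)] show ?thesis by (simp add: latest_row_def)
qed

lemma recfun_stage_guess:
  assumes "recfun k N" "recfun k J"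
  shows "recfun k (\<lambda>p xs. stage_guess p (N p xs) (J p xs))"
  unfolding stage_guess_def Let_def
  by (intro recfun_if recpred_less recfun_prod_encode recfun_latest_row assms recfun_count_pos
      recfun_pred recfun_orac recfun_nth_pos recfun_zero)

section \<open>Padded stages\<close>

primrec block_start :: "(nat \<Rightarrow> nat) \<Rightarrow> nat \<Rightarrow> nat" where
  "block_start C 0 = 0"
| "block_start C (Suc j) = block_start C j + C j + 1"

definition slot :: "(nat \<Rightarrow> nat) \<Rightarrow> nat \<Rightarrow> nat" where
  "slot C j = block_start C j + C j"

text \<open>The cells of block \<open>j\<close> run from \<open>block_start C j\<close> to \<open>slot C j\<close>; the last one carries
  \<open>\<phi> (t j)\<close>, all other cells are \<open>0\<close>.\<close>

definition padded :: "(nat \<Rightarrow> nat) \<Rightarrow> (nat \<Rightarrow> nat) \<Rightarrow> (nat \<Rightarrow> nat) \<Rightarrow> baire" where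
  "padded \<phi> C t k =
     (let j = bounded_least (\<lambda>j. k = slot C j) (Suc k) in if j \<le> k then \<phi> (t j) else 0)"

lemma block_start_cong: "(\<And>i. i < j \<Longrightarrow> C i = C' i) \<Longrightarrow> block_start C j = block_start C' j"
  by (induction j) auto

lemma strict_mono_slot: "strict_mono (slot C)"
  unfolding strict_mono_Suc_iff slot_def by simp

lemma le_slot: "j \<le> slot C j"
  using strict_mono_imp_increasing[OF strict_mono_slot] by blast

lemma padded_slot: "padded \<phi> C t (slot C j) = \<phi> (t j)"
proof -
  have "(LEAST i. slot C j = slot C i) = j"
    by (rule Least_equality) (auto simp: strict_mono_eq[OF strict_mono_slot])
  moreover have "\<exists>m<Suc (slot C j). slot C j = slot C m"
    using le_slot[of j C] by (intro exI[of _ j]) auto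
  ultimately show ?thesis unfolding padded_def bounded_least_eq using le_slot[of j C] by simp
qed

lemma padded_not_slot: "k \<notin> range (slot C) \<Longrightarrow> padded \<phi> C t k = 0"
  unfolding padded_def bounded_least_eq by auto

lemma minus_one_padded: "minus_one (padded \<phi> C t) = minus_one (\<lambda>j. \<phi> (t j))"
  by (rule minus_one_pad[OF strict_mono_slot[of C]]) (auto simp: padded_slot padded_not_slot)

lemma padded_cong:
  assumes agree: "\<forall>j<js. C j = C' j \<and> t j = t' j"
    and beyond: "\<forall>j\<ge>js. k < slot C j" "\<forall>j\<ge>js. k < slot C' j"
  shows "padded \<phi> C t k = padded \<phi> C' t' k"
proof -
  have "slot C j = slot C' j" if "j < js" for j
    using agree that by (auto simp: slot_def intro: block_start_cong)
  then have same: "(\<lambda>j. k = slot C j) = (\<lambda>j. k = slot C' j)"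
    using beyond by (metis not_le order_less_irrefl)
  define j where "j = bounded_least (\<lambda>j. k = slot C j) (Suc k)"
  have "t j = t' j" if "j \<le> k"
  proof -
    have "k = slot C j" unfolding j_def by (rule bounded_least_holds) (use that j_def in simp)
    then have "j < js" using beyond(1) by (metis not_le order_less_irrefl)
    then show ?thesis using agree by blast
  qed
  then show ?thesis unfolding padded_def Let_def same[symmetric] j_def[symmetric] by simp
qed

primrec changes :: "(nat \<Rightarrow> nat \<Rightarrow> nat) \<Rightarrow> nat \<Rightarrow> nat \<Rightarrow> nat" where
  "changes a 0 j = 0"
| "changes a (Suc n) j = changes a n j + (if a (Suc n) j = a n j then 0 else 1)"

lemma changes_mono: "n \<le> n' \<Longrightarrow> changes a n j \<le> changes a n' j"
  by (induction n' rule: dec_induct) auto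

lemma changes_converges_iff:
  "(\<exists>c. eventually (\<lambda>n. changes a n j = c) sequentially) \<longleftrightarrow>
   (\<exists>d. eventually (\<lambda>n. a n j = d) sequentially)"
proof
  assume "\<exists>c. eventually (\<lambda>n. changes a n j = c) sequentially"
  then obtain c N where N: "\<And>n. N \<le> n \<Longrightarrow> changes a n j = c"
    unfolding eventually_sequentially by blast
  have "a n j = a N j" if "N \<le> n" for n
    using that
  proof (induction n rule: dec_induct)
    case (step m)
    then have "changes a (Suc m) j = changes a m j" using N[of m] N[of "Suc m"] by simp
    with step show ?case by (simp split: if_splits)
  qed simp
  then show "\<exists>d. eventually (\<lambda>n. a n j = d) sequentially"
    unfolding eventually_sequentially by blast
next
  assume "\<exists>d. eventually (\<lambda>n. a n j = d) sequentially"
  then obtain d N where N: "\<And>n. N \<le> n \<Longrightarrow> a n j = d"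
    unfolding eventually_sequentially by blast
  have "changes a n j = changes a N j" if "N \<le> n" for n
    using that by (induction n rule: dec_induct) (use N in auto)
  then show "\<exists>c. eventually (\<lambda>n. changes a n j = c) sequentially"
    unfolding eventually_sequentially by blast
qed

lemma changes_converges_or_unbounded:
  "(\<exists>c. eventually (\<lambda>n. changes a n j = c) sequentially) \<or>
   (\<forall>B. eventually (\<lambda>n. B < changes a n j) sequentially)"
proof (rule disjCI)
  assume "\<not> (\<forall>B. eventually (\<lambda>n. B < changes a n j) sequentially)"
  then obtain B where B: "\<not> eventually (\<lambda>n. B < changes a n j) sequentially" by blast
  have bounded: "changes a n j \<le> B" for n
  proof (rule ccontr)
    assume "\<not> changes a n j \<le> B"
    then have "B < changes a n j" by simp
    then have "\<forall>m\<ge>n. B < changes a m j" using changes_mono[of n _ a j]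
      by (blast intro: less_le_trans)
    then show False using B unfolding eventually_sequentially by blast
  qed
  define V where "V = range (\<lambda>n. changes a n j)"
  have "V \<subseteq> {..B}" unfolding V_def using bounded by blast
  then have fin: "finite V" by (rule finite_subset) simp
  have "Max V \<in> V" using fin by (rule Max_in) (simp add: V_def)
  then obtain N where N: "changes a N j = Max V" unfolding V_def by (metis rangeE)
  have "changes a n j = changes a N j" if "N \<le> n" for n
  proof -
    have "changes a n j \<le> Max V" using Max_ge[OF fin] unfolding V_def by blast
    then show ?thesis using changes_mono[OF that, of a j] N by linarith
  qed
  then show "\<exists>c. eventually (\<lambda>n. changes a n j = c) sequentially"
    unfolding eventually_sequentially by blast
qed

text \<open>A guess that changes infinitely often pushes all later blocks to infinity, so the cells
  after its block are eventually \<open>0\<close>.\<close>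

lemma padded_changes_converges:
  "\<exists>v. eventually (\<lambda>n. padded \<phi> (changes a n) (a n) k = v) sequentially"
proof -
  define D where "D j \<longleftrightarrow> (\<forall>B. eventually (\<lambda>n. B < changes a n j) sequentially)" for j
  define js where "js = (LEAST j. k < j \<or> D j)"
  have js: "k < js \<or> D js" unfolding js_def by (rule LeastI[of _ "Suc k"]) simp
  have "\<forall>j\<in>{..<js}. \<exists>cd. eventually (\<lambda>n. changes a n j = fst cd \<and> a n j = snd cd) sequentially"
  proof
    fix j assume "j \<in> {..<js}"
    then have "\<not> D j" unfolding js_def using not_less_Least by auto
    then obtain c d where "eventually (\<lambda>n. changes a n j = c) sequentially"
      "eventually (\<lambda>n. a n j = d) sequentially"
      using changes_converges_or_unbounded changes_converges_iff unfolding D_def by metis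
    then have "eventually (\<lambda>n. changes a n j = fst (c, d) \<and> a n j = snd (c, d)) sequentially"
      by eventually_elim simp
    then show "\<exists>cd. eventually (\<lambda>n. changes a n j = fst cd \<and> a n j = snd cd) sequentially" ..
  qed
  from bchoice[OF this] obtain CD
    where CD: "\<forall>j\<in>{..<js}.
                 eventually (\<lambda>n. changes a n j = fst (CD j) \<and> a n j = snd (CD j)) sequentially"
    by blast
  define C' where "C' j = (if j < js then fst (CD j) else Suc k)" for j
  define t' where "t' j = (if j < js then snd (CD j) else 0)" for j
  have C'_beyond: "\<forall>j\<ge>js. k < slot C' j" unfolding slot_def C'_def by simp
  have "eventually (\<lambda>n. \<forall>j\<in>{..<js}. changes a n j = fst (CD j) \<and> a n j = snd (CD j)) sequentially"
    using CD by (intro eventually_ball_finite) auto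
  moreover have "eventually (\<lambda>n. \<forall>j\<ge>js. k < slot (changes a n) j) sequentially"
  proof (cases "k < js")
    case True
    have "\<forall>j\<ge>js. k < slot (changes a n) j" for n
      using True le_slot by (meson less_le_trans)
    then show ?thesis by (intro always_eventually) blast
  next
    case False
    then have "eventually (\<lambda>n. k < changes a n js) sequentially" using js unfolding D_def by auto
    then show ?thesis
    proof eventually_elim
      case (elim n)
      have "changes a n js \<le> slot (changes a n) j" if "js \<le> j" for j
        using strict_mono_less_eq[OF strict_mono_slot] that unfolding slot_def
        by (metis le_add2 order_trans slot_def)
      then show ?case using elim by (auto intro: less_le_trans)
    qed
  qed
  ultimately have "eventually (\<lambda>n. padded \<phi> (changes a n) (a n) k = padded \<phi> C' t' k) sequentially"
    by eventually_elim (rule padded_cong[where js=js], auto simp: C'_def t'_def C'_beyond)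
  then show ?thesis ..
qed

lemma padded_changes_tendsto:
  assumes "\<forall>j. eventually (\<lambda>n. a n j = t j) sequentially"
  shows "\<exists>C. \<forall>k. eventually (\<lambda>n. padded \<phi> (changes a n) (a n) k = padded \<phi> C t k) sequentially"
proof -
  have "\<forall>j. \<exists>c. eventually (\<lambda>n. changes a n j = c) sequentially"
    using assms changes_converges_iff by blast
  then obtain C where C: "\<forall>j. eventually (\<lambda>n. changes a n j = C j) sequentially"
    by (auto dest: choice)
  have "eventually (\<lambda>n. padded \<phi> (changes a n) (a n) k = padded \<phi> C t k) sequentially" for k
  proof -
    have "eventually (\<lambda>n. \<forall>j\<in>{..<Suc k}. changes a n j = C j \<and> a n j = t j) sequentially"
      using C assms by (intro eventually_ball_finite) (auto intro: eventually_conj)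
    then show ?thesis
      by eventually_elim
         (rule padded_cong[where js="Suc k"], auto intro: less_le_trans[OF _ le_slot])
  qed
  then show ?thesis by blast
qed

lemma recfun_changes:
  assumes a: "recfun 2 (\<lambda>p xs. a p (xs!0) (xs!1))"
  shows "recfun 2 (\<lambda>p xs. changes (a p) (xs!0) (xs!1))"
proof -
  define G where "G = (\<lambda>(p::baire) (zs::nat list).
    zs!1 + (if a p (Suc (zs!0)) (zs!2) = a p (zs!0) (zs!2) then 0 else 1))"
  have a': "recfun 3 (\<lambda>p zs. a p (F p zs) (zs!2))" if "recfun 3 F" for F
    using recfun_comp2[OF a that recfun_proj[of 2 3]] by simp
  have "recfun 3 G" unfolding G_def
    by (intro recfun_add recfun_proj recfun_if recpred_eq a' recfun_succ recfun_const) auto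
  then have R: "recfun 2 (\<lambda>p xs. prim_rec (\<lambda>ys. 0) (G p) (hd xs) (tl xs))"
    using recfun_prim_rec[OF recfun_zero[of 1], of G] by (simp add: numeral_2_eq_2 numeral_3_eq_3)
  have E: "prim_rec (\<lambda>ys. 0) (G p) n [j] = changes (a p) n j" for p n j
    by (induction n) (auto simp: G_def)
  show ?thesis by (rule recfun_cong[OF R]) (auto simp: E length_Suc_conv numeral_2_eq_2)
qed

lemma recfun_block_start:
  assumes c: "recfun 2 (\<lambda>p xs. c p (xs!0) (xs!1))"
  shows "recfun 2 (\<lambda>p xs. block_start (c p (xs!0)) (xs!1))"
proof -
  define G where "G = (\<lambda>(p::baire) (zs::nat list). zs!1 + c p (zs!2) (zs!0) + 1)"
  have "recfun 3 G" unfolding G_def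
    by (intro recfun_add recfun_proj recfun_const recfun_comp2[OF c, simplified]) auto
  then have R: "recfun 2 (\<lambda>p xs. prim_rec (\<lambda>ys. 0) (G p) (hd xs) (tl xs))"
    using recfun_prim_rec[OF recfun_zero[of 1], of G] by (simp add: numeral_2_eq_2 numeral_3_eq_3)
  have E: "prim_rec (\<lambda>ys. 0) (G p) j [n] = block_start (c p n) j" for p n j
    by (induction j) (auto simp: G_def)
  have "recfun 2 (\<lambda>p xs. block_start (c p (xs!1)) (xs!0))"
    by (rule recfun_cong[OF R]) (auto simp: E length_Suc_conv numeral_2_eq_2)
  from recfun_comp2[OF this recfun_proj[of 1 2] recfun_proj[of 0 2]] show ?thesis by simp
qed

lemma recfun_padded:
  assumes C: "recfun 2 (\<lambda>p xs. C p (xs!0) (xs!1))" and t: "recfun 2 (\<lambda>p xs. t p (xs!0) (xs!1))"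
    and \<phi>: "recfun 1 (\<lambda>p xs. \<phi> (xs!0))"
  shows "recfun 2 (\<lambda>p xs. padded \<phi> (C p (xs!0)) (t p (xs!0)) (xs!1))"
proof -
  have start: "recfun 2 (\<lambda>p xs. block_start (C p (xs!0)) (xs!1))" by (rule recfun_block_start[OF C])
  have slot3: "recfun (Suc 2) (\<lambda>p xs. slot (C p (xs!2)) (xs!0))"
    unfolding slot_def
    by (rule recfun_add)
       (use recfun_comp2[OF start recfun_proj[of 2 "Suc 2"] recfun_proj[of 0 "Suc 2"]]
            recfun_comp2[OF C recfun_proj[of 2 "Suc 2"] recfun_proj[of 0 "Suc 2"]] in simp_all)
  have "recpred (Suc 2) (\<lambda>p xs. xs!1 = slot (C p (xs!2)) (xs!0))"
    by (intro recpred_eq recfun_proj slot3) auto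
  from recfun_bounded_least[OF this]
  have "recfun 3 (\<lambda>p xs. bounded_least (\<lambda>m. xs!1 = slot (C p (xs!2)) m) (xs!0))"
    by (simp add: numeral_3_eq_3) (erule recfun_cong, auto simp: length_Suc_conv)
  from recfun_comp3[OF this recfun_succ[OF recfun_proj[of 1 2]] recfun_proj[of 1 2]
      recfun_proj[of 0 2]]
  have least: "recfun 2 (\<lambda>p xs. bounded_least (\<lambda>m. xs!1 = slot (C p (xs!0)) m) (Suc (xs!1)))"
    by simp
  have "recfun 2 (\<lambda>p xs. if bounded_least (\<lambda>m. xs!1 = slot (C p (xs!0)) m) (Suc (xs!1)) \<le> xs!1
          then \<phi> (t p (xs!0) (bounded_least (\<lambda>m. xs!1 = slot (C p (xs!0)) m) (Suc (xs!1)))) else 0)"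
    by (intro recfun_if recpred_le least recfun_proj recfun_zero recfun_comp1[OF \<phi>, simplified]
        recfun_comp2[OF t, simplified]) auto
  then show ?thesis unfolding padded_def Let_def by simp
qed

definition pad_names :: "(nat \<Rightarrow> nat) \<Rightarrow> baire \<Rightarrow> baire" where
  "pad_names \<phi> p m =
     (let n = fst (prod_decode m)
      in padded \<phi> (changes (stage_guess p) n) (stage_guess p n) (snd (prod_decode m)))"

lemma computable_pad_names:
  assumes "recfun 1 (\<lambda>p xs. \<phi> (xs!0))"
  shows "computable (\<lambda>p. Some (pad_names \<phi> p))"
proof -
  have "recfun 2 (\<lambda>p xs. stage_guess p (xs!0) (xs!1))"
    by (intro recfun_stage_guess recfun_proj) auto
  from recfun_padded[OF recfun_changes[OF this] this assms]
  have "recfun 2 (\<lambda>p xs. padded \<phi> (changes (stage_guess p) (xs!0)) (stage_guess p (xs!0)) (xs!1))" .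
  from recfun_comp2[OF this recfun_fst_prod_decode[OF recfun_proj[of 0 1]]
      recfun_snd_prod_decode[OF recfun_proj[of 0 1]]]
  show ?thesis using computable_recfun unfolding pad_names_def Let_def by fastforce
qed

lemma pad_names_converges:
  "\<exists>u. lim_conv (pad_names \<phi> p) u \<and>
     (\<forall>r t. minus_one p = Some r \<longrightarrow> lim_conv r t \<longrightarrow> minus_one u = minus_one (\<lambda>j. \<phi> (t j)))"
proof -
  let ?stage = "\<lambda>n. padded \<phi> (changes (stage_guess p) n) (stage_guess p n)"
  have "\<forall>k. \<exists>v. eventually (\<lambda>n. ?stage n k = v) sequentially"
    using padded_changes_converges by blast
  then obtain u where "\<forall>k. eventually (\<lambda>n. ?stage n k = u k) sequentially"
    by (auto dest: choice)
  then have lim: "lim_conv (pad_names \<phi> p) u"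
    unfolding lim_conv_iff_eventually pad_names_def by simp
  have "minus_one u = minus_one (\<lambda>j. \<phi> (t j))"
    if r: "minus_one p = Some r" and t: "lim_conv r t" for r t
  proof -
    have "\<forall>j. eventually (\<lambda>n. stage_guess p n j = t j) sequentially"
      using stage_guess_converges[OF r t] by blast
    then obtain C where "\<forall>k. eventually (\<lambda>n. ?stage n k = padded \<phi> C t k) sequentially"
      using padded_changes_tendsto by blast
    then have "lim_conv (pad_names \<phi> p) (padded \<phi> C t)"
      unfolding lim_conv_iff_eventually pad_names_def by simp
    then show ?thesis using lim_conv_unique[OF lim] minus_one_padded by metis
  qed
  with lim show ?thesis by blast
qed

section \<open>Strong Weihrauch reductions\<close>

lemma compl_rep_eq: "compl_rep \<delta> p = Some (Option.bind (minus_one p) \<delta>)"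
  unfolding compl_rep_def by (auto split: option.splits)

lemma compl_rep_eq_Some_Some:
  "compl_rep \<delta> p = Some (Some a) \<longleftrightarrow> (\<exists>r. minus_one p = Some r \<and> \<delta> r = Some a)"
  by (simp add: compl_rep_eq bind_eq_Some_conv)

lemma compl_rep_Suc: "compl_rep \<delta> (\<lambda>n. Suc (p n)) = Some (\<delta> p)"
  by (simp add: compl_rep_eq minus_one_Suc)

lemma compl_prob_nonempty: "compl_prob f z \<noteq> {}"
  unfolding compl_prob_def by (auto split: option.splits)

lemma compl_prob_Some: "f a \<noteq> {} \<Longrightarrow> compl_prob f (Some a) = Some ` f a"
  unfolding compl_prob_def by simp

lemma jump_rep_compl_pad_names:
  obtains z where "jump_rep (compl_rep \<delta>) (pad_names \<phi> p) = Some z"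
    and "\<And>r t. minus_one p = Some r \<Longrightarrow> lim_conv r t \<Longrightarrow> z = Option.bind (minus_one (\<lambda>j. \<phi> (t j))) \<delta>"
proof -
  obtain u where "lim_conv (pad_names \<phi> p) u"
    and "\<forall>r t. minus_one p = Some r \<longrightarrow> lim_conv r t \<longrightarrow> minus_one u = minus_one (\<lambda>j. \<phi> (t j))"
    using pad_names_converges by blast
  then show thesis
    using that[of "Option.bind (minus_one u) \<delta>"] by (simp add: jump_rep_eq compl_rep_eq)
qed

lemma sW_leI:
  assumes "computable K" and "computable H"
    and "\<And>p x. \<delta>X p = Some x \<Longrightarrow> f x \<noteq> {} \<Longrightarrow>
           \<exists>p' z. K p = Some p' \<and> \<delta>Z p' = Some z \<and> g z \<noteq> {} \<and>
             (\<forall>q w. \<delta>W q = Some w \<longrightarrow> w \<in> g z \<longrightarrow> (\<exists>q' y. H q = Some q' \<and> \<delta>Y q' = Some y \<and> y \<in> f x))"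
  shows "sW_le \<delta>X \<delta>Y f \<delta>Z \<delta>W g"
proof -
  have "realizes \<delta>X \<delta>Y f (\<lambda>p. Option.bind (Option.bind (K p) G) H)" if G: "realizes \<delta>Z \<delta>W g G" for G
    unfolding realizes_def
  proof (intro allI impI)
    fix p x assume "\<delta>X p = Some x \<and> f x \<noteq> {}"
    then obtain p' z where p': "K p = Some p'" "\<delta>Z p' = Some z" "g z \<noteq> {}"
      and answer: "\<forall>q w. \<delta>W q = Some w \<longrightarrow> w \<in> g z \<longrightarrow>
                          (\<exists>q' y. H q = Some q' \<and> \<delta>Y q' = Some y \<and> y \<in> f x)"
      using assms(3) by blast
    obtain q w where "G p' = Some q" "\<delta>W q = Some w" "w \<in> g z"
      using G p' unfolding realizes_def by blast
    with p'(1) answer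
    show "\<exists>q y. Option.bind (Option.bind (K p) G) H = Some q \<and> \<delta>Y q = Some y \<and> y \<in> f x"
      by auto
  qed
  then show ?thesis unfolding sW_le_def using assms(1,2) by blast
qed

lemma sW_le_trans:
  assumes "sW_le \<delta>1 \<delta>2 f \<delta>3 \<delta>4 g" and "sW_le \<delta>3 \<delta>4 g \<delta>5 \<delta>6 h"
  shows "sW_le \<delta>1 \<delta>2 f \<delta>5 \<delta>6 h"
proof -
  obtain H1 K1 where H1: "computable H1" and K1: "computable K1"
    and red1: "\<And>G. realizes \<delta>3 \<delta>4 g G \<Longrightarrow>
                    realizes \<delta>1 \<delta>2 f (\<lambda>p. Option.bind (Option.bind (K1 p) G) H1)"
    using assms(1) unfolding sW_le_def by blast
  obtain H2 K2 where H2: "computable H2" and K2: "computable K2"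
    and red2: "\<And>G. realizes \<delta>5 \<delta>6 h G \<Longrightarrow>
                    realizes \<delta>3 \<delta>4 g (\<lambda>p. Option.bind (Option.bind (K2 p) G) H2)"
    using assms(2) unfolding sW_le_def by blast
  have "realizes \<delta>1 \<delta>2 f
          (\<lambda>p. Option.bind (Option.bind (Option.bind (K1 p) K2) G) (\<lambda>q. Option.bind (H2 q) H1))"
    if "realizes \<delta>5 \<delta>6 h G" for G
    using red1[OF red2[OF that]] by simp
  moreover have "computable (\<lambda>p. Option.bind (K1 p) K2)" "computable (\<lambda>q. Option.bind (H2 q) H1)"
    using K1 K2 H1 H2 by (blast intro: computable_bind)+
  ultimately show ?thesis unfolding sW_le_def by blast
qed

lemma strict_realizerE:
  assumes "represented \<delta>W"
  obtains G where "realizes \<delta>Z \<delta>W g G" and "\<And>r. G r \<noteq> None \<Longrightarrow> \<exists>z. \<delta>Z r = Some z \<and> g z \<noteq> {}"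
proof -
  have "\<exists>q w. \<delta>W q = Some w \<and> w \<in> g z" if "g z \<noteq> {}" for z
    using that assms unfolding represented_def by blast
  then obtain Q where Q: "\<And>z. g z \<noteq> {} \<Longrightarrow> \<exists>w. \<delta>W (Q z) = Some w \<and> w \<in> g z"
    by metis
  define G where
    "G r = (case \<delta>Z r of Some z \<Rightarrow> if g z \<noteq> {} then Some (Q z) else None | None \<Rightarrow> None)" for r
  have "realizes \<delta>Z \<delta>W g G"
    unfolding realizes_def G_def using Q by fastforce
  moreover have "\<exists>z. \<delta>Z r = Some z \<and> g z \<noteq> {}" if "G r \<noteq> None" for r
    using that unfolding G_def by (auto split: option.splits if_splits)
  ultimately show thesis using that by blast
qed

text \<open>A reduction is only controlled on realizers.  Running it with a realizer that is undefined
  off the domain shows that \<open>K\<close> maps the limit name into the domain; patching that realizer at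
  this one name with the answer of the given realizer of the jump then yields the output.\<close>

lemma sW_le_jump:
  assumes W: "represented \<delta>W" and le: "sW_le \<delta>X \<delta>Y f \<delta>Z \<delta>W g"
  shows "sW_le (jump_rep \<delta>X) \<delta>Y f (jump_rep \<delta>Z) \<delta>W g"
proof -
  obtain H K where H: "computable H" and K: "computable K"
    and red: "\<And>G. realizes \<delta>Z \<delta>W g G \<Longrightarrow> realizes \<delta>X \<delta>Y f (\<lambda>p. Option.bind (Option.bind (K p) G) H)"
    using le unfolding sW_le_def by blast
  obtain L where L: "computable (\<lambda>w. Some (L w))"
    and lim: "\<And>w u v. lim_conv w u \<Longrightarrow> K u = Some v \<Longrightarrow> lim_conv (L w) v"
    using computable_limit_lift[OF K] by blast
  obtain G0 where G0: "realizes \<delta>Z \<delta>W g G0"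
    and strict: "\<And>r. G0 r \<noteq> None \<Longrightarrow> \<exists>z. \<delta>Z r = Some z \<and> g z \<noteq> {}"
    using strict_realizerE[OF W] by blast
  have "realizes (jump_rep \<delta>X) \<delta>Y f (\<lambda>w. Option.bind (Option.bind (Some (L w)) G) H)"
    if G: "realizes (jump_rep \<delta>Z) \<delta>W g G" for G
    unfolding realizes_def
  proof (intro allI impI)
    fix w x assume "jump_rep \<delta>X w = Some x \<and> f x \<noteq> {}"
    then obtain u where u: "lim_conv w u" "\<delta>X u = Some x" and fx: "f x \<noteq> {}"
      using jump_rep_Some[of \<delta>X w x] by blast
    have "\<exists>q y. Option.bind (Option.bind (K u) G0) H = Some q \<and> \<delta>Y q = Some y \<and> y \<in> f x"
      using red[OF G0] u(2) fx unfolding realizes_def by blast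
    then obtain q where "Option.bind (Option.bind (K u) G0) H = Some q" by blast
    then obtain v where v: "K u = Some v" and "G0 v \<noteq> None"
      by (auto simp: bind_eq_Some_conv)
    then obtain z where z: "\<delta>Z v = Some z" "g z \<noteq> {}" using strict by blast
    have "jump_rep \<delta>Z (L w) = Some z" using jump_rep_eq[OF lim[OF u(1) v], of \<delta>Z] z(1) by simp
    then obtain q0 w0 where q0: "G (L w) = Some q0" "\<delta>W q0 = Some w0" "w0 \<in> g z"
      using G z(2) unfolding realizes_def by blast
    define G' where "G' = G0(v := Some q0)"
    have "realizes \<delta>Z \<delta>W g G'" using G0 z(1) q0(2,3) unfolding G'_def realizes_def by auto
    from red[OF this, unfolded realizes_def, rule_format, OF conjI[OF u(2) fx]]
    obtain q y where "Option.bind (Option.bind (K u) G') H = Some q" "\<delta>Y q = Some y" "y \<in> f x"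
      by blast
    then have "H q0 = Some q" "\<delta>Y q = Some y" "y \<in> f x" using v by (simp_all add: G'_def)
    with q0(1)
    show "\<exists>q y. Option.bind (Option.bind (Some (L w)) G) H = Some q \<and> \<delta>Y q = Some y \<and> y \<in> f x"
      by auto
  qed
  then show ?thesis
    unfolding sW_le_def using H L by (intro exI[of _ H] exI[of _ "\<lambda>w. Some (L w)"]) blast
qed

lemma sW_le_compl: "sW_le \<delta>X \<delta>Y f (compl_rep \<delta>X) (compl_rep \<delta>Y) (compl_prob f)"
proof (rule sW_leI[OF computable_Suc computable_minus_one], goal_cases)
  case (1 p x)
  then show ?case
    by (auto simp: compl_rep_Suc compl_prob_Some compl_prob_nonempty compl_rep_eq_Some_Some)
qed

lemma compl_jump_sW_le_jump_compl:
  "sW_le (compl_rep (jump_rep \<delta>X)) (compl_rep \<delta>Y) (compl_prob f)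
         (jump_rep (compl_rep \<delta>X)) (compl_rep \<delta>Y) (compl_prob f)"
proof (rule sW_leI[OF computable_pad_names[of Suc] computable_Some], goal_cases)
  case 1
  show ?case by (intro recfun_succ recfun_proj) simp
next
  case (2 p x)
  then have px: "compl_rep (jump_rep \<delta>X) p = Some x" by simp
  obtain z where z: "jump_rep (compl_rep \<delta>X) (pad_names Suc p) = Some z"
    and zt: "\<And>r t. minus_one p = Some r \<Longrightarrow> lim_conv r t \<Longrightarrow>
               z = Option.bind (minus_one (\<lambda>j. Suc (t j))) \<delta>X"
    using jump_rep_compl_pad_names by blast
  have "compl_prob f z \<subseteq> compl_prob f x"
  proof (cases x)
    case (Some a)
    then obtain r t where "minus_one p = Some r" "lim_conv r t" "\<delta>X t = Some a"
      using px[unfolded Some compl_rep_eq_Some_Some] jump_rep_Some[of \<delta>X _ a] by blast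
    then show ?thesis using zt Some by (simp add: minus_one_Suc)
  qed (simp add: compl_prob_def)
  then show ?case using z compl_prob_nonempty by blast
qed

lemma compl_jump_compl_sW_le_jump_compl:
  "sW_le (compl_rep (jump_rep (compl_rep \<delta>X))) (compl_rep (compl_rep \<delta>Y))
         (compl_prob (compl_prob f))
         (jump_rep (compl_rep \<delta>X)) (compl_rep \<delta>Y) (compl_prob f)"
proof (rule sW_leI[OF computable_pad_names[of id] computable_Suc], goal_cases)
  case 1
  show ?case by (simp add: recfun_proj)
next
  case (2 p x)
  then have px: "compl_rep (jump_rep (compl_rep \<delta>X)) p = Some x" by simp
  obtain z where z: "jump_rep (compl_rep \<delta>X) (pad_names id p) = Some z"
    and zt: "\<And>r t. minus_one p = Some r \<Longrightarrow> lim_conv r t \<Longrightarrow>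
               z = Option.bind (minus_one (\<lambda>j. id (t j))) \<delta>X"
    using jump_rep_compl_pad_names by blast
  have "Some ` compl_prob f z \<subseteq> compl_prob (compl_prob f) x"
  proof (cases x)
    case (Some a)
    then obtain r t where "minus_one p = Some r" "lim_conv r t" "compl_rep \<delta>X t = Some a"
      using px[unfolded Some compl_rep_eq_Some_Some] jump_rep_Some[of "compl_rep \<delta>X" _ a] by blast
    then show ?thesis using zt Some
      by (simp add: compl_rep_eq compl_prob_Some[of "compl_prob f", OF compl_prob_nonempty])
  qed (simp add: compl_prob_def)
  then show ?case using z compl_prob_nonempty by (fastforce simp: compl_rep_Suc)
qed

theorem proposition4p17:
  fixes \<delta>X :: "'a rep" and \<delta>Y :: "'b rep" and f :: "('a, 'b) problem"
  assumes "represented \<delta>X" and "represented \<delta>Y"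
  shows "sW_le (compl_rep (jump_rep \<delta>X)) (compl_rep \<delta>Y) (compl_prob f)
               (jump_rep (compl_rep \<delta>X)) (compl_rep \<delta>Y) (compl_prob f)
       \<and> sW_equiv (jump_rep (compl_rep \<delta>X)) (compl_rep \<delta>Y) (compl_prob f)
                  (compl_rep (jump_rep (compl_rep \<delta>X))) (compl_rep (compl_rep \<delta>Y))
                  (compl_prob (compl_prob f))
       \<and> (sW_equiv \<delta>X \<delta>Y f (compl_rep \<delta>X) (compl_rep \<delta>Y) (compl_prob f) \<longrightarrow>
           sW_equiv (jump_rep \<delta>X) \<delta>Y f (compl_rep (jump_rep \<delta>X)) (compl_rep \<delta>Y) (compl_prob f))"
proof (intro conjI impI)
  show "sW_le (compl_rep (jump_rep \<delta>X)) (compl_rep \<delta>Y) (compl_prob f)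
              (jump_rep (compl_rep \<delta>X)) (compl_rep \<delta>Y) (compl_prob f)"
    by (rule compl_jump_sW_le_jump_compl)
  show "sW_equiv (jump_rep (compl_rep \<delta>X)) (compl_rep \<delta>Y) (compl_prob f)
                 (compl_rep (jump_rep (compl_rep \<delta>X))) (compl_rep (compl_rep \<delta>Y))
                 (compl_prob (compl_prob f))"
    unfolding sW_equiv_def using sW_le_compl compl_jump_compl_sW_le_jump_compl by blast
  assume "sW_equiv \<delta>X \<delta>Y f (compl_rep \<delta>X) (compl_rep \<delta>Y) (compl_prob f)"
  then have "sW_le (jump_rep (compl_rep \<delta>X)) (compl_rep \<delta>Y) (compl_prob f) (jump_rep \<delta>X) \<delta>Y f"
    unfolding sW_equiv_def using sW_le_jump[OF assms(2)] by blast
  with compl_jump_sW_le_jump_compl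
  have "sW_le (compl_rep (jump_rep \<delta>X)) (compl_rep \<delta>Y) (compl_prob f) (jump_rep \<delta>X) \<delta>Y f"
    by (rule sW_le_trans)
  then show "sW_equiv (jump_rep \<delta>X) \<delta>Y f (compl_rep (jump_rep \<delta>X)) (compl_rep \<delta>Y) (compl_prob f)"
    unfolding sW_equiv_def using sW_le_compl by blast
qed

end
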